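(* In the setting described in the context, fix any $\pi=(\pi_1,\dots,\pi_T)\in\Pi$ and for $\tilde\pi_t\in\Pi_t$ let $R_t^{\pi_{t:T}}(\tilde\pi_t)=V_t(\tilde\pi_t,\pi_{(t+1):T})-V_t(\pi_{t:T})$. Under sequential ignorability, the overlap condition (with constant $\eta$) and correct specification, $$R(\pi) \leq R_{1}^{\pi_{1:T}}(\pi_{1}^{*,B}) + \sum_{t=2}^{T} \frac{2^{t-2}}{\eta^{t-1}} R_{t}^{\pi_{t:T}}(\pi_{t}^{*,B}).$$
   Context: Fix $T\ge1$; $\mathcal{A}_t=\{0,\dots,d_t-1\}$; $\underline v_t=(v_1,\dots,v_t)$, $\underline{\mathcal{A}}_t=\mathcal{A}_1\times\cdots\times\mathcal{A}_t$. Potential outcomes $Y_t(\underline a_t)$, potential states $S_t(\underline a_{t-1})$; observed $A_t$, $S_t=S_t(\underline A_{t-1})$, $Y_t=Y_t(\underline A_t)$; potential history $H_t(\underline a_{t-1})=(\underline a_{t-1},S_1,S_2(\underline a_1),\dots,S_t(\underline a_{t-1}))$, observed $H_t=H_t(\underline A_{t-1})$ with support $\mathcal{H}_t$. $e_t(h_t,a_t)=\mathbb{P}(A_t=a_t\mid H_t=h_t)$. Stage-$t$ policies are measurable $\pi_t:\mathcal{H}_t\to\mathcal{A}_t$; class $\Pi=\Pi_1\times\cdots\times\Pi_T$, $\Pi_{s:t}=\Pi_s\times\cdots\times\Pi_t$, $\pi_{s:t}=(\pi_s,\dots,\pi_t)$. Welfare $W(\pi)=\mathbb{E}[\sum_t\sum_{\underline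 a_t}Y_t(\underline a_t)\prod_{s\le t}\mathbf{1}\{\pi_s(H_s(\underline a_{s-1}))=a_s\}]$, regret $R(\pi)=\max_{\tilde\pi\in\Pi}W(\tilde\pi)-W(\pi)$. Policy value $V_t(\pi_{t:T})=\mathbb{E}[\sum_{s=t}^T\sum_{\underline a_s}Y_s(\underline a_s)\mathbf{1}\{\underline A_{t-1}=\underline a_{t-1}\}\prod_{\ell=t}^s\mathbf{1}\{\pi_\ell(H_\ell(\underline a_{\ell-1}))=a_\ell\}]$ (indicator on $\underline A_0$ equal to 1). Q-functions: $Q_T(h_T,a_T)=\mathbb{E}[Y_T\mid H_T=h_T,A_T=a_T]$; for $t<T$, $Q_t^{\pi_{(t+1):T}}(h_t,a_t)=\mathbb{E}[Y_t+Q_{t+1}^{\pi_{(t+2):T}}(H_{t+1},\pi_{t+1}(H_{t+1}))\mid H_t=h_t,A_t=a_t]$ ($Q_T^{\pi_{(T+1):T}}=Q_T$). Backward induction: $\pi_T^{*,B}\in\arg\max_{\Pi_T}\mathbb{E}[Q_T(H_T,\pi_T(H_T))]$, $\pi_t^{*,B}\in\arg\max_{\Pi_t}\mathbb{E}[Q_t^{\pi^{*,B}_{(t+1):T}}(H_t,\pi_t(H_t))]$ for $t=T-1,\dots,1$. (Sequential ignorability) $\{Y_t(\underline a_t),\dots,Y_T(\underline a_T),S_{t+1}(\underline a_t),\dots,S_T(\underline a_{T-1})\}\perp A_t\mid H_t$ for all $t,\underline a_T$. (Overlap) $\eta\in(0,1)$ with $e_t(h_t,a_t)\ge\eta$ whenever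 $\pi_t(h_t)=a_t$ for some $\pi_t\in\Pi_t$. (Correct specification) There is $\pi^*_{2:T}\in\Pi_{2:T}$ with $Q_t^{\pi^*_{(t+1):T}}(H_t,\pi^*_t(H_t))\ge\sup_{\pi_t\in\Pi_t}Q_t^{\pi^*_{(t+1):T}}(H_t,\pi_t(H_t))$ a.s., $t=2,\dots,T$. *)

theory Defs
  imports "HOL-Probability.Probability"
begin

(* Histories: h_t = (list of past actions a_1..a_{t-1}, states S_1..S_t bs an
   extensional function on {1..t}). *)
type_synonym 'S hist = "nat list \<times> (nat \<Rightarrow> 'S)"

definition hist_space :: "'S measure \<Rightarrow> nat \<Rightarrow> 'S hist measure" where
  "hist_space SS t = count_space UNIV \<Otimes>\<^sub>M PiM {1..t} (\<lambda>_. SS)"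

definition act_seqs :: "(nat \<Rightarrow> nat) \<Rightarrow> nat \<Rightarrow> nat list set" where
  "act_seqs d t = {bs. length bs = t \<and> (\<forall>i<t. bs ! i < d (i + 1))}"

definition obs_acts :: "(nat \<Rightarrow> 'a \<Rightarrow> nat) \<Rightarrow> nat \<Rightarrow> 'a \<Rightarrow> nat list" where
  "obs_acts A t \<omega> = map (\<lambda>s. A s \<omega>) [1..<t+1]"

(* potential history H_t(bs), bs of length t-1 ; S s bs = S_s(bs) *)
definition pot_hist :: "(nat \<Rightarrow> nat list \<Rightarrow> 'a \<Rightarrow> 'S) \<Rightarrow> nat \<Rightarrow> nat list \<Rightarrow> 'a \<Rightarrow> 'S hist" where
  "pot_hist S t bs \<omega> = (bs, (\<lambda>s\<in>{1..t}. S s (take (s - 1) bs) \<omega>))"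

definition obs_hist :: "(nat \<Rightarrow> 'a \<Rightarrow> nat) \<Rightarrow> (nat \<Rightarrow> nat list \<Rightarrow> 'a \<Rightarrow> 'S) \<Rightarrow> nat \<Rightarrow> 'a \<Rightarrow> 'S hist" where
  "obs_hist A S t \<omega> = pot_hist S t (obs_acts A (t - 1) \<omega>) \<omega>"

definition obs_out :: "(nat \<Rightarrow> 'a \<Rightarrow> nat) \<Rightarrow> (nat \<Rightarrow> nat list \<Rightarrow> 'a \<Rightarrow> real) \<Rightarrow> nat \<Rightarrow> 'a \<Rightarrow> real" where
  "obs_out A Y t \<omega> = Y t (obs_acts A t \<omega>) \<omega>"

definition cexp_version :: "'a measure \<Rightarrow> 'b measure \<Rightarrow> ('a \<Rightarrow> 'b) \<Rightarrow> ('a \<Rightarrow> real) \<Rightarrow> ('b \<Rightarrow> real) \<Rightarrow> bool" where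
  "cexp_version M N Z X g \<longleftrightarrow>
     g \<in> borel_measurable N \<and> integrable M (\<lambda>\<omega>. g (Z \<omega>)) \<and>
     (\<forall>B\<in>sets N. (LINT \<omega>|M. indicator B (Z \<omega>) * g (Z \<omega>)) = (LINT \<omega>|M. indicator B (Z \<omega>) * X \<omega>))"

definition cond_indep :: "'a measure \<Rightarrow> 'b measure \<Rightarrow> ('a \<Rightarrow> 'b) \<Rightarrow> 'c measure \<Rightarrow> ('a \<Rightarrow> 'c)
    \<Rightarrow> 'd measure \<Rightarrow> ('a \<Rightarrow> 'd) \<Rightarrow> bool" where
  "cond_indep M MX X MW W MZ Z \<longleftrightarrow>
     (let F = vimage_algebra (space M) Z MZ in
      \<forall>B\<in>sets MX. \<forall>C\<in>sets MW.
        AE \<omega> in M. real_cond_exp M F (\<lambda>x. indicator B (X x) * indicator C (W x)) \<omega>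
                  = real_cond_exp M F (\<lambda>x. indicator B (X x)) \<omega> * real_cond_exp M F (\<lambda>x. indicator C (W x)) \<omega>)"

definition welfare :: "'a measure \<Rightarrow> nat \<Rightarrow> (nat \<Rightarrow> nat) \<Rightarrow> (nat \<Rightarrow> nat list \<Rightarrow> 'a \<Rightarrow> real)
    \<Rightarrow> (nat \<Rightarrow> nat list \<Rightarrow> 'a \<Rightarrow> 'S) \<Rightarrow> (nat \<Rightarrow> 'S hist \<Rightarrow> nat) \<Rightarrow> real" where
  "welfare M T d Y S pol = (LINT \<omega>|M. (\<Sum>t\<in>{1..T}. \<Sum>bs\<in>act_seqs d t.
      Y t bs \<omega> * (\<Prod>s\<in>{1..t}. if pol s (pot_hist S s (take (s - 1) bs) \<omega>) = bs ! (s - 1) then 1 else 0)))"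

definition regret :: "'a measure \<Rightarrow> nat \<Rightarrow> (nat \<Rightarrow> nat) \<Rightarrow> (nat \<Rightarrow> nat list \<Rightarrow> 'a \<Rightarrow> real)
    \<Rightarrow> (nat \<Rightarrow> nat list \<Rightarrow> 'a \<Rightarrow> 'S) \<Rightarrow> (nat \<Rightarrow> ('S hist \<Rightarrow> nat) set) \<Rightarrow> (nat \<Rightarrow> 'S hist \<Rightarrow> nat) \<Rightarrow> real" where
  "regret M T d Y S Pol pol =
     (SUP p\<in>{p. \<forall>t\<in>{1..T}. p t \<in> Pol t}. welfare M T d Y S p) - welfare M T d Y S pol"

definition pvalue :: "'a measure \<Rightarrow> nat \<Rightarrow> (nat \<Rightarrow> nat) \<Rightarrow> (nat \<Rightarrow> 'a \<Rightarrow> nat) \<Rightarrow> (nat \<Rightarrow> nat list \<Rightarrow> 'a \<Rightarrow> real)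
    \<Rightarrow> (nat \<Rightarrow> nat list \<Rightarrow> 'a \<Rightarrow> 'S) \<Rightarrow> (nat \<Rightarrow> 'S hist \<Rightarrow> nat) \<Rightarrow> nat \<Rightarrow> real" where
  "pvalue M T d A Y S pol t = (LINT \<omega>|M. (\<Sum>s\<in>{t..T}. \<Sum>bs\<in>act_seqs d s.
      Y s bs \<omega> * (if obs_acts A (t - 1) \<omega> = take (t - 1) bs then 1 else 0) *
      (\<Prod>l\<in>{t..s}. if pol l (pot_hist S l (take (l - 1) bs) \<omega>) = bs ! (l - 1) then 1 else 0)))"


definition stage_regret :: "'a measure \<Rightarrow> nat \<Rightarrow> (nat \<Rightarrow> nat) \<Rightarrow> (nat \<Rightarrow> 'a \<Rightarrow> nat) \<Rightarrow> (nat \<Rightarrow> nat list \<Rightarrow> 'a \<Rightarrow> real)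
    \<Rightarrow> (nat \<Rightarrow> nat list \<Rightarrow> 'a \<Rightarrow> 'S) \<Rightarrow> (nat \<Rightarrow> 'S hist \<Rightarrow> nat) \<Rightarrow> nat \<Rightarrow> ('S hist \<Rightarrow> nat) \<Rightarrow> real" where
  "stage_regret M T d A Y S pol t p = pvalue M T d A Y S (pol(t := p)) t - pvalue M T d A Y S pol t"

end

theory Submission
  imports Defs
begin

text \<open>
  Write \<open>Q\<^sub>t[p]\<close> for the Q-function of a policy \<open>p\<close> and
  \<open>D\<^sub>t = E Q\<^sub>t[\<pi>\<^sup>B](H\<^sub>t, \<pi>\<^sup>B\<^sub>t(H\<^sub>t)) - E Q\<^sub>t[\<pi>](H\<^sub>t, \<pi>\<^sub>t(H\<^sub>t))\<close>.
  Sequential ignorability identifies the value of a policy with the integral of its Q-function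
  along its own actions, \<open>V\<^sub>t(p) = E Q\<^sub>t[p](H\<^sub>t, p\<^sub>t(H\<^sub>t))\<close>. Correct specification provides a policy
  \<open>\<pi>\<^sup>*\<close> that is greedy for its own Q-functions, and backward induction forces
  \<open>Q[\<pi>\<^sup>B] = Q[\<pi>\<^sup>*]\<close> almost surely; so \<open>\<pi>\<^sup>B\<close> dominates every policy from the second stage on,
  whence \<open>R(\<pi>) \<le> D\<^sub>1\<close> and \<open>D\<^sub>t \<ge> 0\<close> for \<open>t \<ge> 2\<close>.

  Moreover \<open>D\<^sub>t - R\<^sub>t(\<pi>\<^sup>B\<^sub>t) = E (Q\<^sub>t[\<pi>\<^sup>B] - Q\<^sub>t[\<pi>])(H\<^sub>t, \<pi>\<^sup>B\<^sub>t(H\<^sub>t))\<close>. Inverse propensity weighting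
  turns this into the expectation of the same difference one stage later, at each policy's own
  actions, times a weight in \<open>[0, 1 / \<eta>]\<close> (overlap). That difference is almost surely
  nonnegative, so \<open>D\<^sub>t \<le> R\<^sub>t + D\<^sub>t\<^sub>+\<^sub>1 / \<eta>\<close>, and unrolling gives the bound with the weights
  \<open>1 / \<eta>\<^sup>t\<^sup>-\<^sup>1\<close>, which are at most \<open>2\<^sup>t\<^sup>-\<^sup>2 / \<eta>\<^sup>t\<^sup>-\<^sup>1\<close>.
\<close>

section \<open>Integration, conditional expectation and conditional independence\<close>

lemma integrable_bounded_mult:
  fixes f g :: "'a \<Rightarrow> real"
  assumes "integrable M g" "f \<in> borel_measurable M" "\<And>x. x \<in> space M \<Longrightarrow> \<bar>f x\<bar> \<le> K"
  shows "integrable M (\<lambda>x. f x * g x)"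
proof (rule Bochner_Integration.integrable_bound[where f="\<lambda>x. K * g x"])
  show "integrable M (\<lambda>x. K * g x)" using assms(1) by simp
  show "(\<lambda>x. f x * g x) \<in> borel_measurable M" using assms(1,2) by measurable
  have "K \<ge> 0" if "x \<in> space M" for x using assms(3)[OF that] by linarith
  then show "AE x in M. norm (f x * g x) \<le> norm (K * g x)"
    using assms(3) by (auto simp: abs_mult intro!: mult_right_mono)
qed

lemma AE_eq_if_AE_le_integral_ge:
  fixes u v :: "'a \<Rightarrow> real"
  assumes "integrable M u" "integrable M v" "AE x in M. u x \<le> v x" "(LINT x|M. v x) \<le> (LINT x|M. u x)"
  shows "AE x in M. u x = v x"
proof -
  have nn: "AE x in M. 0 \<le> v x - u x" using assms(3) by eventually_elim simp
  have "(LINT x|M. v x - u x) = 0"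
    using assms(1,2,4) integral_nonneg_AE[OF nn] by simp
  then have "AE x in M. v x - u x = 0"
    using integral_nonneg_eq_0_iff_AE[OF Bochner_Integration.integrable_diff[OF assms(2,1)] nn] by simp
  then show ?thesis by eventually_elim simp
qed

lemma pred_eq_count_space:
  fixes f g :: "'a \<Rightarrow> 'b::countable"
  assumes "f \<in> measurable M (count_space UNIV)" "g \<in> measurable M (count_space UNIV)"
  shows "Measurable.pred M (\<lambda>x. f x = g x)"
  by (rule measurable_compose_countable[where f="\<lambda>i x. f x = i", OF _ assms(2)]) (use assms(1) in measurable)

lemma sigma_finite_subalgebra_vimage_algebra:
  assumes "prob_space M" "Z \<in> measurable M N"
  shows "sigma_finite_subalgebra M (vimage_algebra (space M) Z N)"
proof -
  have sub: "subalgebra M (vimage_algebra (space M) Z N)"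
    unfolding subalgebra_def using assms(2)
    by (auto simp: sets_vimage_algebra2 measurable_def)
  have "finite_measure (restr_to_subalg M (vimage_algebra (space M) Z N))"
    by (rule finite_measure_restr_to_subalg[OF sub]) (use assms(1) prob_space_def in auto)
  then show ?thesis using sub
    by (simp add: finite_measure.axioms(1) sigma_finite_subalgebra.intro)
qed

lemma measurable_vimage_algebra_self:
  "Z \<in> measurable M N \<Longrightarrow> Z \<in> measurable (vimage_algebra (space M) Z N) N"
  by (rule measurable_vimage_algebra1) (auto simp: measurable_def)

lemma cexp_version_AE_real_cond_exp:
  assumes P: "prob_space M" and Z: "Z \<in> measurable M N" and X: "integrable M X"
    and cv: "cexp_version M N Z X g"
  shows "AE \<omega> in M. real_cond_exp M (vimage_algebra (space M) Z N) X \<omega> = g (Z \<omega>)"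
proof -
  interpret sigma_finite_subalgebra M "vimage_algebra (space M) Z N"
    by (rule sigma_finite_subalgebra_vimage_algebra[OF P Z])
  have g: "g \<in> borel_measurable N" and gi: "integrable M (\<lambda>\<omega>. g (Z \<omega>))"
    and eq: "\<And>B. B \<in> sets N \<Longrightarrow> (LINT \<omega>|M. indicator B (Z \<omega>) * g (Z \<omega>)) = (LINT \<omega>|M. indicator B (Z \<omega>) * X \<omega>)"
    using cv unfolding cexp_version_def by auto
  show ?thesis
  proof (rule real_cond_exp_charact)
    fix A assume "A \<in> sets (vimage_algebra (space M) Z N)"
    then obtain B where B: "B \<in> sets N" "A = Z -` B \<inter> space M"
      using Z by (auto simp: sets_vimage_algebra2 measurable_def)
    have ind: "indicator A x = (indicator B (Z x) :: real)" if "x \<in> space M" for x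
      using that by (auto simp: B(2) indicator_def)
    have "(\<integral>x\<in>A. X x \<partial>M) = (LINT \<omega>|M. indicator B (Z \<omega>) * X \<omega>)"
      unfolding set_lebesgue_integral_def by (rule Bochner_Integration.integral_cong) (auto simp: ind)
    also have "\<dots> = (\<integral>x\<in>A. g (Z x) \<partial>M)"
      unfolding set_lebesgue_integral_def eq[OF B(1), symmetric]
      by (rule Bochner_Integration.integral_cong) (auto simp: ind)
    finally show "(\<integral>x\<in>A. X x \<partial>M) = (\<integral>x\<in>A. g (Z x) \<partial>M)" .
  qed (use X gi measurable_vimage_algebra_self[OF Z] g in auto)
qed

lemma cexp_version_integral_bounded_mult:
  assumes P: "prob_space M" and Z: "Z \<in> measurable M N" and X: "integrable M X"
    and cv: "cexp_version M N Z X g"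
    and \<psi>: "\<psi> \<in> borel_measurable N" "\<And>x. x \<in> space N \<Longrightarrow> \<bar>\<psi> x\<bar> \<le> K"
  shows "(LINT \<omega>|M. \<psi> (Z \<omega>) * X \<omega>) = (LINT \<omega>|M. \<psi> (Z \<omega>) * g (Z \<omega>))"
proof -
  let ?F = "vimage_algebra (space M) Z N"
  interpret sigma_finite_subalgebra M ?F by (rule sigma_finite_subalgebra_vimage_algebra[OF P Z])
  have \<psi>Z: "(\<lambda>\<omega>. \<psi> (Z \<omega>)) \<in> borel_measurable ?F"
    using measurable_vimage_algebra_self[OF Z] \<psi>(1) by measurable
  have bnd: "\<And>x. x \<in> space M \<Longrightarrow> \<bar>\<psi> (Z x)\<bar> \<le> K" using \<psi>(2) Z by (auto simp: measurable_def)
  have "(LINT \<omega>|M. \<psi> (Z \<omega>) * X \<omega>) = (LINT \<omega>|M. \<psi> (Z \<omega>) * real_cond_exp M ?F X \<omega>)"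
    by (rule real_cond_exp_intg(2)[symmetric, OF integrable_bounded_mult[OF X _ bnd] \<psi>Z])
       (use X Z \<psi>(1) in auto)
  also have "\<dots> = (LINT \<omega>|M. \<psi> (Z \<omega>) * g (Z \<omega>))"
    by (rule integral_cong_AE)
       (use cexp_version_AE_real_cond_exp[OF P Z X cv] X Z \<psi>(1) cv[unfolded cexp_version_def]
         in \<open>auto intro!: measurable_from_subalg[OF subalg \<psi>Z]\<close>)
  finally show ?thesis .
qed

lemma cexp_version_AE_mono:
  assumes P: "prob_space M" and Z: "Z \<in> measurable M N" and X: "integrable M X1" "integrable M X2"
    and cv: "cexp_version M N Z X1 g1" "cexp_version M N Z X2 g2"
    and le: "AE \<omega> in M. X1 \<omega> \<le> X2 \<omega>"
  shows "AE \<omega> in M. g1 (Z \<omega>) \<le> g2 (Z \<omega>)"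
  using sigma_finite_subalgebra.real_cond_exp_mono[OF sigma_finite_subalgebra_vimage_algebra[OF P Z] le X]
    cexp_version_AE_real_cond_exp[OF P Z X(1) cv(1)]
    cexp_version_AE_real_cond_exp[OF P Z X(2) cv(2)]
  by eventually_elim auto

lemma cexp_version_AE_nonneg:
  assumes P: "prob_space M" and Z: "Z \<in> measurable M N" and X: "integrable M X"
    and cv: "cexp_version M N Z X g" and nn: "AE \<omega> in M. 0 \<le> X \<omega>"
  shows "AE \<omega> in M. 0 \<le> g (Z \<omega>)"
  using sigma_finite_subalgebra.real_cond_exp_pos[OF sigma_finite_subalgebra_vimage_algebra[OF P Z] nn
      borel_measurable_integrable[OF X]]
    cexp_version_AE_real_cond_exp[OF P Z X cv]
  by eventually_elim auto

lemma integral_distr_density: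
  fixes g :: "'a \<Rightarrow> real" and f :: "'b \<Rightarrow> real"
  assumes g: "g \<in> borel_measurable M" "AE x in M. 0 \<le> g x" and \<phi>: "\<phi> \<in> measurable M N"
    and f: "f \<in> borel_measurable N"
  shows "integral\<^sup>L (distr (density M (\<lambda>x. ennreal (g x))) N \<phi>) f = (LINT x|M. g x * f (\<phi> x))"
proof -
  have "integral\<^sup>L (distr (density M (\<lambda>x. ennreal (g x))) N \<phi>) f
      = integral\<^sup>L (density M (\<lambda>x. ennreal (g x))) (\<lambda>x. f (\<phi> x))"
    by (rule integral_distr) (use \<phi> f in auto)
  also have "\<dots> = (LINT x|M. g x * f (\<phi> x))"
    by (subst integral_density) (use g \<phi> f in auto)
  finally show ?thesis .
qed

lemma nn_integral_distr_density:
  fixes g :: "'a \<Rightarrow> real" and f :: "'b \<Rightarrow> ennreal"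
  assumes g: "g \<in> borel_measurable M" and \<phi>: "\<phi> \<in> measurable M N"
    and f: "f \<in> borel_measurable N"
  shows "integral\<^sup>N (distr (density M (\<lambda>x. ennreal (g x))) N \<phi>) f = (\<integral>\<^sup>+x. ennreal (g x) * f (\<phi> x) \<partial>M)"
proof -
  have "integral\<^sup>N (distr (density M (\<lambda>x. ennreal (g x))) N \<phi>) f
      = integral\<^sup>N (density M (\<lambda>x. ennreal (g x))) (\<lambda>x. f (\<phi> x))"
    by (rule nn_integral_distr) (use \<phi> f in auto)
  also have "\<dots> = (\<integral>\<^sup>+x. ennreal (g x) * f (\<phi> x) \<partial>M)"
    by (subst nn_integral_density) (use g \<phi> f in auto)
  finally show ?thesis .
qed

lemma emeasure_distr_density:
  fixes g :: "'a \<Rightarrow> real"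
  assumes g: "integrable M g" "AE x in M. 0 \<le> g x" and \<phi>: "\<phi> \<in> measurable M N" and C: "C \<in> sets N"
  shows "emeasure (distr (density M (\<lambda>x. ennreal (g x))) N \<phi>) C = ennreal (LINT x|M. g x * indicator C (\<phi> x))"
proof -
  have "emeasure (distr (density M (\<lambda>x. ennreal (g x))) N \<phi>) C
      = integral\<^sup>N (distr (density M (\<lambda>x. ennreal (g x))) N \<phi>) (indicator C)"
    by (subst nn_integral_indicator) (use C in auto)
  also have "\<dots> = (\<integral>\<^sup>+x. ennreal (g x * indicator C (\<phi> x)) \<partial>M)"
    by (subst nn_integral_distr_density[OF borel_measurable_integrable[OF g(1)] \<phi>])
       (use C in \<open>auto simp: indicator_def intro!: nn_integral_cong\<close>)
  also have "\<dots> = ennreal (LINT x|M. g x * indicator C (\<phi> x))"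
  proof (rule nn_integral_eq_integral)
    show "integrable M (\<lambda>x. g x * indicator C (\<phi> x))"
      using integrable_bounded_mult[OF g(1), of "\<lambda>x. indicator C (\<phi> x)" 1] \<phi> C
      by (simp add: mult.commute)
    show "AE x in M. 0 \<le> g x * indicator C (\<phi> x)" using g(2) by eventually_elim auto
  qed
  finally show ?thesis .
qed

lemma cexp_version_nn_integral:
  fixes \<phi> :: "'b \<Rightarrow> ennreal"
  assumes P: "prob_space M" and Z: "Z \<in> measurable M N" and X: "integrable M X"
    and nn: "AE \<omega> in M. 0 \<le> X \<omega>" and cv: "cexp_version M N Z X g" and \<phi>: "\<phi> \<in> borel_measurable N"
  shows "(\<integral>\<^sup>+\<omega>. ennreal (X \<omega>) * \<phi> (Z \<omega>) \<partial>M) = (\<integral>\<^sup>+\<omega>. ennreal (g (Z \<omega>)) * \<phi> (Z \<omega>) \<partial>M)"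
proof -
  have gZ: "integrable M (\<lambda>\<omega>. g (Z \<omega>))" and
    eq: "\<And>C. C \<in> sets N \<Longrightarrow> (LINT \<omega>|M. indicator C (Z \<omega>) * g (Z \<omega>)) = (LINT \<omega>|M. indicator C (Z \<omega>) * X \<omega>)"
    using cv unfolding cexp_version_def by auto
  note gnn = cexp_version_AE_nonneg[OF P Z X cv nn]
  have "distr (density M (\<lambda>\<omega>. ennreal (X \<omega>))) N Z = distr (density M (\<lambda>\<omega>. ennreal (g (Z \<omega>)))) N Z"
  proof (rule measure_eqI)
    fix C assume "C \<in> sets (distr (density M (\<lambda>\<omega>. ennreal (X \<omega>))) N Z)"
    then have C: "C \<in> sets N" by simp
    show "emeasure (distr (density M (\<lambda>\<omega>. ennreal (X \<omega>))) N Z) C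
        = emeasure (distr (density M (\<lambda>\<omega>. ennreal (g (Z \<omega>)))) N Z) C"
      using eq[OF C] by (simp add: emeasure_distr_density[OF X nn Z C] emeasure_distr_density[OF gZ gnn Z C]
          mult.commute)
  qed simp
  then show ?thesis
    using nn_integral_distr_density[OF borel_measurable_integrable[OF X] Z \<phi>]
      nn_integral_distr_density[OF borel_measurable_integrable[OF gZ] Z \<phi>]
    by simp
qed

lemma cond_indep_AE_real_cond_exp_factor:
  assumes P: "prob_space M" and Z: "Z \<in> measurable M N" and W: "W \<in> measurable M (count_space UNIV)"
    and ci: "cond_indep M MX X (count_space UNIV) W N Z"
    and cv: "cexp_version M N Z (\<lambda>\<omega>. indicator {\<omega>. W \<omega> = b} \<omega>) g" and B: "B \<in> sets MX"
  shows "AE \<omega> in M. real_cond_exp M (vimage_algebra (space M) Z N)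
      (\<lambda>x. indicator B (X x) * indicator {x. W x = b} x) \<omega>
    = real_cond_exp M (vimage_algebra (space M) Z N) (\<lambda>x. indicator B (X x)) \<omega> * g (Z \<omega>)"
proof -
  interpret prob_space M by (rule P)
  have "integrable M (\<lambda>\<omega>. indicator {\<omega>. W \<omega> = b} \<omega> :: real)"
    by (rule integrable_const_bound[where B=1]) (use W in \<open>unfold indicator_def, measurable\<close>)
  note propensity = cexp_version_AE_real_cond_exp[OF P Z this cv]
  have ind_eq: "\<And>x. indicator {b} (W x) = (indicator {x. W x = b} x :: real)" by (auto simp: indicator_def)
  from ci B have "AE \<omega> in M. real_cond_exp M (vimage_algebra (space M) Z N)
      (\<lambda>x. indicator B (X x) * indicator {b} (W x)) \<omega>
    = real_cond_exp M (vimage_algebra (space M) Z N) (\<lambda>x. indicator B (X x)) \<omega>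
      * real_cond_exp M (vimage_algebra (space M) Z N) (\<lambda>x. indicator {b} (W x)) \<omega>"
    unfolding cond_indep_def Let_def by auto
  then show ?thesis using propensity by eventually_elim (simp only: ind_eq)
qed

lemma cond_indep_integral_rectangle:
  assumes P: "prob_space M" and Z: "Z \<in> measurable M N" and X: "X \<in> measurable M MX"
    and W: "W \<in> measurable M (count_space UNIV)"
    and ci: "cond_indep M MX X (count_space UNIV) W N Z"
    and cv: "cexp_version M N Z (\<lambda>\<omega>. indicator {\<omega>. W \<omega> = b} \<omega>) g"
    and D: "D \<in> sets N" and B: "B \<in> sets MX"
  shows "(LINT \<omega>|M. indicator D (Z \<omega>) * (indicator B (X \<omega>) * indicator {\<omega>. W \<omega> = b} \<omega>))
       = (LINT \<omega>|M. indicator D (Z \<omega>) * (g (Z \<omega>) * indicator B (X \<omega>)))"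
proof -
  let ?F = "vimage_algebra (space M) Z N"
  let ?XB = "\<lambda>\<omega>. indicator B (X \<omega>) :: real" and ?WB = "\<lambda>\<omega>. indicator {\<omega>. W \<omega> = b} \<omega> :: real"
  interpret sigma_finite_subalgebra M ?F by (rule sigma_finite_subalgebra_vimage_algebra[OF P Z])
  interpret prob_space M by (rule P)
  have g: "g \<in> borel_measurable N" "integrable M (\<lambda>\<omega>. g (Z \<omega>))"
    using cv unfolding cexp_version_def by auto
  have DF: "(\<lambda>\<omega>. indicator D (Z \<omega>) :: real) \<in> borel_measurable ?F"
    using measurable_vimage_algebra_self[OF Z] D by measurable
  have DgF: "(\<lambda>\<omega>. indicator D (Z \<omega>) * g (Z \<omega>)) \<in> borel_measurable ?F"
    using measurable_vimage_algebra_self[OF Z] D g(1) by measurable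
  have DM: "(\<lambda>\<omega>. indicator D (Z \<omega>) :: real) \<in> borel_measurable M"
    by (rule measurable_from_subalg[OF subalg DF])
  have [measurable]: "?XB \<in> borel_measurable M" "?WB \<in> borel_measurable M"
    using X B W unfolding indicator_def by measurable
  note factor = cond_indep_AE_real_cond_exp_factor[OF P Z W ci cv B]
  have "(LINT \<omega>|M. indicator D (Z \<omega>) * (?XB \<omega> * ?WB \<omega>))
      = (LINT \<omega>|M. indicator D (Z \<omega>) * real_cond_exp M ?F (\<lambda>x. ?XB x * ?WB x) \<omega>)"
  proof (rule real_cond_exp_intg(2)[symmetric, OF integrable_const_bound[where B=1] DF])
    show "(\<lambda>\<omega>. indicator D (Z \<omega>) * (?XB \<omega> * ?WB \<omega>)) \<in> borel_measurable M" using DM by measurable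
    show "(\<lambda>\<omega>. ?XB \<omega> * ?WB \<omega>) \<in> borel_measurable M" by measurable
  qed (auto simp: indicator_def)
  also have "\<dots> = (LINT \<omega>|M. (indicator D (Z \<omega>) * g (Z \<omega>)) * real_cond_exp M ?F ?XB \<omega>)"
  proof (rule integral_cong_AE)
    show "AE \<omega> in M. indicator D (Z \<omega>) * real_cond_exp M ?F (\<lambda>x. ?XB x * ?WB x) \<omega>
        = (indicator D (Z \<omega>) * g (Z \<omega>)) * real_cond_exp M ?F ?XB \<omega>"
      using factor by eventually_elim (simp only: mult_ac)
  qed (use DM borel_measurable_integrable[OF g(2)] in \<open>auto intro!: borel_measurable_times borel_measurable_cond_exp2\<close>)
  also have "\<dots> = (LINT \<omega>|M. (indicator D (Z \<omega>) * g (Z \<omega>)) * ?XB \<omega>)"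
  proof (rule real_cond_exp_intg(2)[OF _ DgF])
    have "integrable M (\<lambda>\<omega>. (indicator D (Z \<omega>) * ?XB \<omega>) * g (Z \<omega>))"
      by (rule integrable_bounded_mult[OF g(2), where K=1]) (use DM in \<open>measurable, auto simp: indicator_def\<close>)
    then show "integrable M (\<lambda>\<omega>. (indicator D (Z \<omega>) * g (Z \<omega>)) * ?XB \<omega>)" by (simp add: ac_simps)
  qed simp
  finally show ?thesis by (simp add: ac_simps)
qed

lemma cond_indep_integral_indicator_eq:
  assumes P: "prob_space M" and Z: "Z \<in> measurable M N" and X: "X \<in> measurable M MX"
    and W: "W \<in> measurable M (count_space UNIV)"
    and ci: "cond_indep M MX X (count_space UNIV) W N Z"
    and cv: "cexp_version M N Z (\<lambda>\<omega>. indicator {\<omega>. W \<omega> = b} \<omega>) g"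
    and f: "f \<in> borel_measurable (N \<Otimes>\<^sub>M MX)"
  shows "(LINT \<omega>|M. indicator {\<omega>. W \<omega> = b} \<omega> * f (Z \<omega>, X \<omega>)) = (LINT \<omega>|M. g (Z \<omega>) * f (Z \<omega>, X \<omega>))"
proof -
  interpret prob_space M by (rule P)
  let ?\<Omega> = "space N \<times> space MX" and ?E = "{D \<times> B | D B. D \<in> sets N \<and> B \<in> sets MX}"
  let ?WB = "\<lambda>\<omega>. indicator {\<omega>. W \<omega> = b} \<omega> :: real"
  let ?\<mu>W = "distr (density M (\<lambda>\<omega>. ennreal (?WB \<omega>))) (N \<Otimes>\<^sub>M MX) (\<lambda>\<omega>. (Z \<omega>, X \<omega>))"
  let ?\<mu>g = "distr (density M (\<lambda>\<omega>. ennreal (g (Z \<omega>)))) (N \<Otimes>\<^sub>M MX) (\<lambda>\<omega>. (Z \<omega>, X \<omega>))"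
  have WBm: "?WB \<in> borel_measurable M" using W unfolding indicator_def by measurable
  have WB: "integrable M ?WB" by (rule integrable_const_bound[where B=1]) (use WBm in auto)
  have WBnn: "AE \<omega> in M. 0 \<le> ?WB \<omega>" by simp
  have g: "integrable M (\<lambda>\<omega>. g (Z \<omega>))" using cv unfolding cexp_version_def by auto
  note gnn = cexp_version_AE_nonneg[OF P Z WB cv WBnn]
  have ZX: "(\<lambda>\<omega>. (Z \<omega>, X \<omega>)) \<in> measurable M (N \<Otimes>\<^sub>M MX)" using Z X by measurable
  have "?\<mu>W = ?\<mu>g"
  proof (rule measure_eqI_generator_eq[where \<Omega>="?\<Omega>" and E="?E" and A="\<lambda>_. ?\<Omega>"])
    show "Int_stable ?E" by (rule Int_stable_pair_measure_generator)
    show "?E \<subseteq> Pow ?\<Omega>" by (auto dest: sets.sets_into_space)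
    show "sets ?\<mu>W = sigma_sets ?\<Omega> ?E" "sets ?\<mu>g = sigma_sets ?\<Omega> ?E"
      by (simp_all only: sets_distr sets_pair_measure)
    show "range (\<lambda>_. ?\<Omega>) \<subseteq> ?E" "(\<Union>i. ?\<Omega>) = ?\<Omega>" by blast+
    have "?\<Omega> \<in> sets (N \<Otimes>\<^sub>M MX)" by (metis sets.top space_pair_measure)
    then show "\<And>i. emeasure ?\<mu>W ?\<Omega> \<noteq> \<infinity>" by (simp add: emeasure_distr_density[OF WB WBnn ZX])
  next
    fix R assume "R \<in> ?E"
    then obtain D B where R: "R = D \<times> B" and D: "D \<in> sets N" and B: "B \<in> sets MX" by blast
    then have "R \<in> sets (N \<Otimes>\<^sub>M MX)" by auto
    moreover have "(LINT \<omega>|M. ?WB \<omega> * indicator R (Z \<omega>, X \<omega>)) = (LINT \<omega>|M. g (Z \<omega>) * indicator R (Z \<omega>, X \<omega>))"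
      using cond_indep_integral_rectangle[OF P Z X W ci cv D B] by (simp add: R indicator_times ac_simps)
    ultimately show "emeasure ?\<mu>W R = emeasure ?\<mu>g R"
      by (simp add: emeasure_distr_density[OF WB WBnn ZX] emeasure_distr_density[OF g gnn ZX])
  qed
  then show ?thesis
    using integral_distr_density[OF WBm WBnn ZX f] integral_distr_density[OF borel_measurable_integrable[OF g] gnn ZX f]
    by simp
qed

section \<open>Histories and inverse propensity weighting\<close>

lemma finite_act_seqs: "finite (act_seqs d k)"
proof (rule finite_subset)
  show "act_seqs d k \<subseteq> {bs. set bs \<subseteq> {..<Max (d ` {1..k})} \<and> length bs = k}"
  proof safe
    fix bs x assume bs: "bs \<in> act_seqs d k" and "x \<in> set bs"
    then obtain i where i: "i < k" "x = bs ! i" by (auto simp: act_seqs_def in_set_conv_nth)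
    then have "x < d (i + 1)" using bs by (auto simp: act_seqs_def)
    also have "d (i + 1) \<le> Max (d ` {1..k})" using i by (intro Max_ge) auto
    finally show "x < Max (d ` {1..k})" .
  qed (auto simp: act_seqs_def)
qed (rule finite_lists_length_eq, simp)

lemma take_act_seqs: "bs \<in> act_seqs d k \<Longrightarrow> j \<le> k \<Longrightarrow> take j bs \<in> act_seqs d j"
  by (auto simp: act_seqs_def)

lemma length_obs_acts [simp]: "length (obs_acts A k \<omega>) = k"
  by (simp add: obs_acts_def)

lemma nth_obs_acts: "i < k \<Longrightarrow> obs_acts A k \<omega> ! i = A (Suc i) \<omega>"
  by (simp add: obs_acts_def del: upt_Suc)

lemma take_obs_acts: "j \<le> k \<Longrightarrow> take j (obs_acts A k \<omega>) = obs_acts A j \<omega>"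
  by (simp add: obs_acts_def take_map take_upt min_def del: upt_Suc)

lemma obs_acts_Suc: "obs_acts A (Suc k) \<omega> = obs_acts A k \<omega> @ [A (Suc k) \<omega>]"
  by (simp add: obs_acts_def)

lemma obs_acts_eq_take_iff:
  assumes "1 \<le> t" "t \<le> length bs"
  shows "obs_acts A t \<omega> = take t bs \<longleftrightarrow> obs_acts A (t - 1) \<omega> = take (t - 1) bs \<and> A t \<omega> = bs ! (t - 1)"
proof -
  obtain k where k: "t = Suc k" using assms(1) by (cases t) auto
  then show ?thesis using assms(2) by (simp add: obs_acts_Suc take_Suc_conv_app_nth)
qed

lemma fst_obs_hist: "fst (obs_hist A S t \<omega>) = obs_acts A (t - 1) \<omega>"
  by (simp add: obs_hist_def pot_hist_def)

locale dynamic_treatment_regime =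
  fixes M :: "'a measure" and SS :: "'S measure" and T :: nat and d :: "nat \<Rightarrow> nat"
    and A :: "nat \<Rightarrow> 'a \<Rightarrow> nat"
    and S :: "nat \<Rightarrow> nat list \<Rightarrow> 'a \<Rightarrow> 'S"
    and Y :: "nat \<Rightarrow> nat list \<Rightarrow> 'a \<Rightarrow> real"
    and Pol :: "nat \<Rightarrow> ('S hist \<Rightarrow> nat) set"
    and e :: "nat \<Rightarrow> 'S hist \<Rightarrow> nat \<Rightarrow> real"
    and Q :: "nat \<Rightarrow> (nat \<Rightarrow> 'S hist \<Rightarrow> nat) \<Rightarrow> 'S hist \<times> nat \<Rightarrow> real"
    and \<eta> :: real
    and pol piB :: "nat \<Rightarrow> 'S hist \<Rightarrow> nat"
  assumes M: "prob_space M"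
    and T: "1 \<le> T"
    and A_meas: "\<forall>t\<in>{1..T}. A t \<in> measurable M (count_space UNIV) \<and> (\<forall>\<omega>\<in>space M. A t \<omega> < d t)"
    and S_meas: "\<forall>t\<in>{1..T}. \<forall>bs\<in>act_seqs d (t - 1). S t bs \<in> measurable M SS"
    and Y_int: "\<forall>t\<in>{1..T}. \<forall>bs\<in>act_seqs d t. integrable M (Y t bs)"
    and Pi_policies: "\<forall>t\<in>{1..T}. \<forall>p\<in>Pol t. p \<in> measurable (hist_space SS t) (count_space UNIV)
                        \<and> (\<forall>h\<in>space (hist_space SS t). p h < d t)"
    and seq_ign: "\<forall>t\<in>{1..T}. \<forall>a\<in>act_seqs d T.
        cond_indep M (PiM {t..T} (\<lambda>_. borel) \<Otimes>\<^sub>M PiM {Suc t..T} (\<lambda>_. SS))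
          (\<lambda>\<omega>. ((\<lambda>s\<in>{t..T}. Y s (take s a) \<omega>), (\<lambda>s\<in>{Suc t..T}. S s (take (s - 1) a) \<omega>)))
          (count_space UNIV) (A t) (hist_space SS t) (obs_hist A S t)"
    and e_version: "\<forall>t\<in>{1..T}. \<forall>a. cexp_version M (hist_space SS t) (obs_hist A S t)
                        (\<lambda>\<omega>. indicator {\<omega>. A t \<omega> = a} \<omega>) (\<lambda>h. e t h a)"
    and eta: "0 < \<eta>" "\<eta> < 1"
    and overlap: "\<forall>t\<in>{1..T}. \<forall>p\<in>Pol t. AE \<omega> in M. \<eta> \<le> e t (obs_hist A S t \<omega>) (p (obs_hist A S t \<omega>))"
    and Q_version: "\<forall>p. (\<forall>t\<in>{1..T}. p t \<in> Pol t) \<longrightarrow>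
        cexp_version M (hist_space SS T \<Otimes>\<^sub>M count_space UNIV) (\<lambda>\<omega>. (obs_hist A S T \<omega>, A T \<omega>))
          (obs_out A Y T) (Q T p) \<and>
        (\<forall>t\<in>{1..<T}. cexp_version M (hist_space SS t \<Otimes>\<^sub>M count_space UNIV) (\<lambda>\<omega>. (obs_hist A S t \<omega>, A t \<omega>))
          (\<lambda>\<omega>. obs_out A Y t \<omega> + Q (Suc t) p (obs_hist A S (Suc t) \<omega>, p (Suc t) (obs_hist A S (Suc t) \<omega>)))
          (Q t p))"
    and backward: "\<forall>t\<in>{1..T}. piB t \<in> Pol t \<and>
        (\<forall>p\<in>Pol t. (LINT \<omega>|M. Q t piB (obs_hist A S t \<omega>, p (obs_hist A S t \<omega>)))
                 \<le> (LINT \<omega>|M. Q t piB (obs_hist A S t \<omega>, piB t (obs_hist A S t \<omega>))))"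
    and correct_spec: "\<exists>piS. (\<forall>t\<in>{1..T}. piS t \<in> Pol t) \<and>
        (\<forall>t\<in>{2..T}. AE \<omega> in M. \<forall>p\<in>Pol t.
            Q t piS (obs_hist A S t \<omega>, p (obs_hist A S t \<omega>))
              \<le> Q t piS (obs_hist A S t \<omega>, piS t (obs_hist A S t \<omega>)))"
    and pol: "\<forall>t\<in>{1..T}. pol t \<in> Pol t"
begin

sublocale prob_space M by (rule M)

abbreviation "H t \<equiv> obs_hist A S t"
abbreviation "HS t \<equiv> hist_space SS t"

definition "policies = {p. \<forall>t\<in>{1..T}. p t \<in> Pol t}"

lemma policies_Pol: "p \<in> policies \<Longrightarrow> t \<in> {1..T} \<Longrightarrow> p t \<in> Pol t"
  by (simp add: policies_def)

lemma measurable_A: "t \<in> {1..T} \<Longrightarrow> A t \<in> measurable M (count_space UNIV)"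
  using A_meas by auto

lemma A_less: "t \<in> {1..T} \<Longrightarrow> \<omega> \<in> space M \<Longrightarrow> A t \<omega> < d t"
  using A_meas by auto

lemma d_pos: "t \<in> {1..T} \<Longrightarrow> 0 < d t"
proof -
  assume t: "t \<in> {1..T}"
  obtain \<omega> where "\<omega> \<in> space M" using not_empty by blast
  from A_less[OF t this] show ?thesis by simp
qed

lemma obs_acts_in_act_seqs: "\<omega> \<in> space M \<Longrightarrow> k \<le> T \<Longrightarrow> obs_acts A k \<omega> \<in> act_seqs d k"
  by (auto simp: act_seqs_def nth_obs_acts intro!: A_less)

lemma measurable_obs_acts: "k \<le> T \<Longrightarrow> obs_acts A k \<in> measurable M (count_space UNIV)"
proof (induction k)
  case (Suc k)
  note [measurable] = Suc.IH[OF Suc_leD[OF Suc.prems]] measurable_A[of "Suc k"]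
  show ?case unfolding obs_acts_Suc[abs_def] using Suc.prems
    by (intro measurable_compose_countable[where f="\<lambda>bs \<omega>. bs @ [A (Suc k) \<omega>]" and g="obs_acts A k"]
        measurable_compose[OF measurable_A measurable_count_space]) auto
qed (simp add: obs_acts_def[abs_def])

lemma measurable_pot_hist:
  assumes "t \<le> T" "bs \<in> act_seqs d (t - 1)"
  shows "pot_hist S t bs \<in> measurable M (HS t)"
  unfolding pot_hist_def hist_space_def
proof (intro measurable_Pair measurable_restrict)
  fix s assume s: "s \<in> {1..t}"
  then have "take (s - 1) bs \<in> act_seqs d (s - 1)" using assms by (intro take_act_seqs) auto
  then show "S s (take (s - 1) bs) \<in> measurable M SS" using S_meas s assms by auto
qed auto

lemma measurable_H: "t \<in> {1..T} \<Longrightarrow> H t \<in> measurable M (HS t)"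
proof -
  assume t: "t \<in> {1..T}"
  have "obs_acts A (t - 1) \<in> measurable M (count_space (act_seqs d (t - 1)))"
    using t by (intro measurable_count_space_extend[OF subset_UNIV _ measurable_obs_acts]) (auto intro: obs_acts_in_act_seqs)
  then show ?thesis unfolding obs_hist_def
    by (rule measurable_compose_countable'[where f="pot_hist S t", rotated])
       (use t in \<open>auto intro: measurable_pot_hist countable_finite finite_act_seqs\<close>)
qed

lemma H_space: "t \<in> {1..T} \<Longrightarrow> \<omega> \<in> space M \<Longrightarrow> H t \<omega> \<in> space (HS t)"
  using measurable_space[OF measurable_H] .

lemma measurable_Pol: "t \<in> {1..T} \<Longrightarrow> c \<in> Pol t \<Longrightarrow> c \<in> measurable (HS t) (count_space UNIV)"
  using Pi_policies by auto

lemma Pol_less: "t \<in> {1..T} \<Longrightarrow> c \<in> Pol t \<Longrightarrow> \<omega> \<in> space M \<Longrightarrow> c (H t \<omega>) < d t"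
  using Pi_policies H_space by auto

lemma measurable_HA: "t \<in> {1..T} \<Longrightarrow> (\<lambda>\<omega>. (H t \<omega>, A t \<omega>)) \<in> measurable M (HS t \<Otimes>\<^sub>M count_space UNIV)"
  by (intro measurable_Pair measurable_H measurable_A)

lemma measurable_H_policy:
  "t \<in> {1..T} \<Longrightarrow> c \<in> Pol t \<Longrightarrow> (\<lambda>\<omega>. (H t \<omega>, c (H t \<omega>))) \<in> measurable M (HS t \<Otimes>\<^sub>M count_space UNIV)"
  by (intro measurable_Pair measurable_H measurable_compose[OF measurable_H measurable_Pol])

lemma borel_measurable_Y: "s \<in> {1..T} \<Longrightarrow> bs \<in> act_seqs d s \<Longrightarrow> Y s bs \<in> borel_measurable M"
  using Y_int by (auto intro: borel_measurable_integrable)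

lemma propensity_cexp:
  "t \<in> {1..T} \<Longrightarrow> cexp_version M (HS t) (H t) (\<lambda>\<omega>. indicator {\<omega>. A t \<omega> = b} \<omega>) (\<lambda>h. e t h b)"
  using e_version by auto

lemma borel_measurable_propensity: "t \<in> {1..T} \<Longrightarrow> (\<lambda>h. e t h b) \<in> borel_measurable (HS t)"
  using propensity_cexp unfolding cexp_version_def by blast

lemma borel_measurable_action_indicator: "t \<in> {1..T} \<Longrightarrow> (\<lambda>\<omega>. indicator {\<omega>. A t \<omega> = b} \<omega> :: real) \<in> borel_measurable M"
  using measurable_A unfolding indicator_def by measurable

lemma action_indicator_integrable: "t \<in> {1..T} \<Longrightarrow> integrable M (\<lambda>\<omega>. indicator {\<omega>. A t \<omega> = b} \<omega> :: real)"
  by (rule integrable_const_bound[where B=1]) (auto intro: borel_measurable_action_indicator)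

lemma nn_integral_action_eq_propensity:
  assumes t: "t \<in> {1..T}" and g: "g \<in> borel_measurable (HS t \<Otimes>\<^sub>M count_space UNIV)"
  shows "(\<integral>\<^sup>+\<omega>. g (H t \<omega>, A t \<omega>) \<partial>M) = (\<Sum>b<d t. \<integral>\<^sup>+\<omega>. ennreal (e t (H t \<omega>) b) * g (H t \<omega>, b) \<partial>M)"
proof -
  have gb: "(\<lambda>h. g (h, b)) \<in> borel_measurable (HS t)" for b
    using g by measurable
  have "(\<integral>\<^sup>+\<omega>. g (H t \<omega>, A t \<omega>) \<partial>M)
      = (\<integral>\<^sup>+\<omega>. (\<Sum>b<d t. ennreal (indicator {\<omega>. A t \<omega> = b} \<omega>) * g (H t \<omega>, b)) \<partial>M)"
  proof (rule nn_integral_cong)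
    fix \<omega> assume "\<omega> \<in> space M"
    then have "A t \<omega> \<in> {..<d t}" using A_less[OF t] by simp
    have "(\<Sum>b<d t. ennreal (indicator {\<omega>. A t \<omega> = b} \<omega>) * g (H t \<omega>, b))
        = (\<Sum>b<d t. if A t \<omega> = b then g (H t \<omega>, A t \<omega>) else 0)"
      by (intro sum.cong) auto
    then show "g (H t \<omega>, A t \<omega>) = (\<Sum>b<d t. ennreal (indicator {\<omega>. A t \<omega> = b} \<omega>) * g (H t \<omega>, b))"
      using \<open>A t \<omega> \<in> {..<d t}\<close> by (simp add: sum.delta')
  qed
  also have "\<dots> = (\<Sum>b<d t. \<integral>\<^sup>+\<omega>. ennreal (indicator {\<omega>. A t \<omega> = b} \<omega>) * g (H t \<omega>, b) \<partial>M)"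
    using borel_measurable_action_indicator[OF t] measurable_compose[OF measurable_H[OF t] gb]
    by (intro nn_integral_sum) (auto simp: comp_def)
  also have "\<dots> = (\<Sum>b<d t. \<integral>\<^sup>+\<omega>. ennreal (e t (H t \<omega>) b) * g (H t \<omega>, b) \<partial>M)"
    by (intro sum.cong refl cexp_version_nn_integral[OF M measurable_H[OF t] action_indicator_integrable[OF t]
          _ propensity_cexp[OF t] gb]) auto
  finally show ?thesis .
qed

text \<open>Here \<open>z\<close> is a pair (history, action). The cut-off at \<open>\<eta>\<close> only matters on the null set where
  overlap fails, and it keeps the weight bounded everywhere.\<close>

definition "ipw t c z =
  (if c (fst z) = snd z \<and> \<eta> \<le> e t (fst z) (snd z) then 1 / e t (fst z) (snd z) else 0)"

lemma ipw_nonneg: "0 \<le> ipw t c z"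
  using eta by (auto simp: ipw_def)

lemma ipw_le: "ipw t c z \<le> 1 / \<eta>"
  using eta by (auto simp: ipw_def intro!: divide_left_mono)

lemma abs_mult_ipw_le: "\<bar>x\<bar> \<le> K \<Longrightarrow> \<bar>x * ipw t c z\<bar> \<le> K / \<eta>"
  using mult_mono[OF _ ipw_le, of "\<bar>x\<bar>" K t c z] ipw_nonneg[of t c z] by (simp add: abs_mult)

lemma borel_measurable_ipw:
  assumes t: "t \<in> {1..T}" and c: "c \<in> Pol t"
  shows "ipw t c \<in> borel_measurable (HS t \<Otimes>\<^sub>M count_space UNIV)"
proof -
  have [measurable]: "(\<lambda>z. e t (fst z) (snd z)) \<in> borel_measurable (HS t \<Otimes>\<^sub>M count_space UNIV)"
    by (rule measurable_compose_countable[where f="\<lambda>i z. e t (fst z) i" and g=snd])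
       (use borel_measurable_propensity[OF t] in measurable)
  have [measurable]: "Measurable.pred (HS t \<Otimes>\<^sub>M count_space UNIV) (\<lambda>z. c (fst z) = snd z)"
    by (rule pred_eq_count_space[OF measurable_compose[OF measurable_fst measurable_Pol[OF t c]] measurable_snd])
  show ?thesis unfolding ipw_def[abs_def] by measurable
qed

lemma borel_measurable_ipw_weighted:
  "t \<in> {1..T} \<Longrightarrow> c \<in> Pol t \<Longrightarrow> \<phi> \<in> borel_measurable (HS t) \<Longrightarrow>
    (\<lambda>z. \<phi> (fst z) * ipw t c z) \<in> borel_measurable (HS t \<Otimes>\<^sub>M count_space UNIV)"
  by (intro borel_measurable_times measurable_compose[OF measurable_fst] borel_measurable_ipw)

lemma ipw_weighted_bound:
  "(\<And>h. h \<in> space (HS t) \<Longrightarrow> \<bar>\<phi> h\<bar> \<le> K) \<Longrightarrow> z \<in> space (HS t \<Otimes>\<^sub>M count_space UNIV) \<Longrightarrow>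
    \<bar>\<phi> (fst z) * ipw t c z\<bar> \<le> K / \<eta>"
  by (rule abs_mult_ipw_le) (auto simp: space_pair_measure)

lemma ipw_weighted_action:
  assumes t: "t \<in> {1..T}" and c: "c \<in> Pol t"
    and \<phi>: "\<phi> \<in> borel_measurable (HS t)" and \<phi>_bound: "\<And>h. h \<in> space (HS t) \<Longrightarrow> \<bar>\<phi> h\<bar> \<le> K"
  shows "(\<lambda>\<omega>. \<phi> (H t \<omega>) * ipw t c (H t \<omega>, A t \<omega>)) \<in> borel_measurable M"
    and "\<And>\<omega>. \<omega> \<in> space M \<Longrightarrow> \<bar>\<phi> (H t \<omega>) * ipw t c (H t \<omega>, A t \<omega>)\<bar> \<le> K / \<eta>"
  using measurable_compose[OF measurable_HA[OF t] borel_measurable_ipw_weighted[OF t c \<phi>]]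
    ipw_weighted_bound[where \<phi>=\<phi> and t=t and c=c, OF \<phi>_bound measurable_space[OF measurable_HA[OF t]]]
  by (auto simp: comp_def)

lemma overlap_AE: "t \<in> {1..T} \<Longrightarrow> c \<in> Pol t \<Longrightarrow> AE \<omega> in M. \<eta> \<le> e t (H t \<omega>) (c (H t \<omega>))"
  using overlap by auto

lemma propensity_mult_ipw:
  "\<eta> \<le> e t h (c h) \<Longrightarrow> e t h b * ipw t c (h, b) = (if c h = b then 1 else 0)"
  using eta by (auto simp: ipw_def)

lemma nn_integral_policy_eq_ipw:
  assumes t: "t \<in> {1..T}" and c: "c \<in> Pol t" and f: "f \<in> borel_measurable (HS t \<Otimes>\<^sub>M count_space UNIV)"
  shows "(\<integral>\<^sup>+\<omega>. f (H t \<omega>, c (H t \<omega>)) \<partial>M) = (\<integral>\<^sup>+\<omega>. f (H t \<omega>, A t \<omega>) * ennreal (ipw t c (H t \<omega>, A t \<omega>)) \<partial>M)"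
proof -
  have fw: "(\<lambda>z. f z * ennreal (ipw t c z)) \<in> borel_measurable (HS t \<Otimes>\<^sub>M count_space UNIV)"
    using f borel_measurable_ipw[OF t c] by measurable
  have "(\<integral>\<^sup>+\<omega>. f (H t \<omega>, A t \<omega>) * ennreal (ipw t c (H t \<omega>, A t \<omega>)) \<partial>M)
      = (\<Sum>b<d t. \<integral>\<^sup>+\<omega>. ennreal (e t (H t \<omega>) b) * (f (H t \<omega>, b) * ennreal (ipw t c (H t \<omega>, b))) \<partial>M)"
    by (rule nn_integral_action_eq_propensity[OF t fw])
  also have "\<dots> = (\<Sum>b<d t. \<integral>\<^sup>+\<omega>. (if c (H t \<omega>) = b then f (H t \<omega>, c (H t \<omega>)) else 0) \<partial>M)"
  proof (intro sum.cong refl nn_integral_cong_AE)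
    fix b
    show "AE \<omega> in M. ennreal (e t (H t \<omega>) b) * (f (H t \<omega>, b) * ennreal (ipw t c (H t \<omega>, b)))
        = (if c (H t \<omega>) = b then f (H t \<omega>, c (H t \<omega>)) else 0)"
      using overlap_AE[OF t c]
    proof eventually_elim
      case (elim \<omega>)
      have "ennreal (e t (H t \<omega>) b) * ennreal (ipw t c (H t \<omega>, b)) = (if c (H t \<omega>) = b then 1 else 0)"
        using propensity_mult_ipw[of t "H t \<omega>" c b, OF elim] eta elim
        by (subst ennreal_mult''[symmetric]) (auto simp: ipw_nonneg)
      then show ?case by (auto simp: ac_simps)
    qed
  qed
  also have "\<dots> = (\<integral>\<^sup>+\<omega>. (\<Sum>b<d t. if c (H t \<omega>) = b then f (H t \<omega>, c (H t \<omega>)) else 0) \<partial>M)"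
  proof (rule nn_integral_sum[symmetric])
    have [measurable]: "(\<lambda>\<omega>. f (H t \<omega>, c (H t \<omega>))) \<in> borel_measurable M"
      "(\<lambda>\<omega>. c (H t \<omega>)) \<in> measurable M (count_space UNIV)"
      using measurable_compose[OF measurable_H_policy[OF t c] f] measurable_compose[OF measurable_H[OF t] measurable_Pol[OF t c]]
      by (simp_all add: comp_def)
    show "(\<lambda>\<omega>. if c (H t \<omega>) = b then f (H t \<omega>, c (H t \<omega>)) else 0) \<in> borel_measurable M" for b
      by measurable
  qed
  also have "\<dots> = (\<integral>\<^sup>+\<omega>. f (H t \<omega>, c (H t \<omega>)) \<partial>M)"
    using Pol_less[OF t c] by (intro nn_integral_cong) (simp add: sum.delta)
  finally show ?thesis ..
qed

lemma integrable_policy: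
  fixes f :: "'S hist \<times> nat \<Rightarrow> real"
  assumes t: "t \<in> {1..T}" and c: "c \<in> Pol t" and f: "f \<in> borel_measurable (HS t \<Otimes>\<^sub>M count_space UNIV)"
    and i: "integrable M (\<lambda>\<omega>. f (H t \<omega>, A t \<omega>))"
  shows "integrable M (\<lambda>\<omega>. f (H t \<omega>, c (H t \<omega>)))"
proof -
  have wi: "integrable M (\<lambda>\<omega>. ipw t c (H t \<omega>, A t \<omega>) * f (H t \<omega>, A t \<omega>))"
    using ipw_nonneg ipw_le measurable_compose[OF measurable_HA[OF t] borel_measurable_ipw[OF t c]]
    by (intro integrable_bounded_mult[OF i, where K="1 / \<eta>"]) (auto simp: comp_def)
  have "(\<integral>\<^sup>+\<omega>. ennreal (norm (f (H t \<omega>, c (H t \<omega>)))) \<partial>M)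
      = (\<integral>\<^sup>+\<omega>. ennreal (norm (f (H t \<omega>, A t \<omega>))) * ennreal (ipw t c (H t \<omega>, A t \<omega>)) \<partial>M)"
    by (rule nn_integral_policy_eq_ipw[OF t c]) (use f in measurable)
  also have "\<dots> = (\<integral>\<^sup>+\<omega>. ennreal (norm (ipw t c (H t \<omega>, A t \<omega>) * f (H t \<omega>, A t \<omega>))) \<partial>M)"
    by (intro nn_integral_cong) (simp add: ennreal_mult abs_mult ipw_nonneg mult.commute)
  also have "\<dots> < \<infinity>" using wi by (simp add: integrable_iff_bounded)
  finally show ?thesis
    using measurable_compose[OF measurable_H_policy[OF t c] f] by (simp add: integrable_iff_bounded comp_def)
qed

lemma integral_policy_eq_ipw:
  fixes f :: "'S hist \<times> nat \<Rightarrow> real"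
  assumes t: "t \<in> {1..T}" and c: "c \<in> Pol t" and f: "f \<in> borel_measurable (HS t \<Otimes>\<^sub>M count_space UNIV)"
    and i: "integrable M (\<lambda>\<omega>. f (H t \<omega>, A t \<omega>))"
  shows "(LINT \<omega>|M. f (H t \<omega>, c (H t \<omega>))) = (LINT \<omega>|M. f (H t \<omega>, A t \<omega>) * ipw t c (H t \<omega>, A t \<omega>))"
proof -
  have wi: "integrable M (\<lambda>\<omega>. f (H t \<omega>, A t \<omega>) * ipw t c (H t \<omega>, A t \<omega>))"
    using ipw_nonneg ipw_le measurable_compose[OF measurable_HA[OF t] borel_measurable_ipw[OF t c]]
    by (subst mult.commute, intro integrable_bounded_mult[OF i, where K="1 / \<eta>"]) (auto simp: comp_def)
  have part: "(\<integral>\<^sup>+\<omega>. ennreal (g (H t \<omega>, c (H t \<omega>))) \<partial>M)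
      = (\<integral>\<^sup>+\<omega>. ennreal (g (H t \<omega>, A t \<omega>) * ipw t c (H t \<omega>, A t \<omega>)) \<partial>M)"
    if g: "g \<in> borel_measurable (HS t \<Otimes>\<^sub>M count_space UNIV)" for g
    using nn_integral_policy_eq_ipw[OF t c, of "\<lambda>z. ennreal (g z)"] g
    by (simp add: ennreal_mult'' ipw_nonneg)
  show ?thesis
    using part[OF f] part[of "\<lambda>z. - f z"] f
    by (simp add: real_lebesgue_integral_def[OF integrable_policy[OF t c f i]] real_lebesgue_integral_def[OF wi])
qed

lemma AE_policy_if_AE_action:
  assumes t: "t \<in> {1..T}" and c: "c \<in> Pol t" and P: "Measurable.pred (HS t \<Otimes>\<^sub>M count_space UNIV) P"
    and ae: "AE \<omega> in M. P (H t \<omega>, A t \<omega>)"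
  shows "AE \<omega> in M. P (H t \<omega>, c (H t \<omega>))"
proof -
  let ?f = "\<lambda>z. indicator {z. \<not> P z} z :: ennreal"
  have "(\<integral>\<^sup>+\<omega>. ?f (H t \<omega>, c (H t \<omega>)) \<partial>M) = (\<integral>\<^sup>+\<omega>. ?f (H t \<omega>, A t \<omega>) * ennreal (ipw t c (H t \<omega>, A t \<omega>)) \<partial>M)"
    by (rule nn_integral_policy_eq_ipw[OF t c]) (use P in \<open>unfold indicator_def, measurable\<close>)
  also have "\<dots> = (\<integral>\<^sup>+\<omega>. 0 \<partial>M)"
    using ae by (intro nn_integral_cong_AE) (auto simp: indicator_def)
  finally have "(\<integral>\<^sup>+\<omega>. ?f (H t \<omega>, c (H t \<omega>)) \<partial>M) = 0" by simp
  moreover have "(\<lambda>\<omega>. ?f (H t \<omega>, c (H t \<omega>))) \<in> borel_measurable M"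
    using measurable_compose[OF measurable_H_policy[OF t c], of ?f] P unfolding indicator_def by (simp add: comp_def)
  ultimately have "AE \<omega> in M. ?f (H t \<omega>, c (H t \<omega>)) = 0" by (simp add: nn_integral_0_iff_AE)
  then show ?thesis by eventually_elim (simp add: indicator_def)
qed

section \<open>Q-functions and policy values\<close>

lemma obs_out_eq_sum:
  assumes t: "t \<in> {1..T}" and \<omega>: "\<omega> \<in> space M"
  shows "obs_out A Y t \<omega> = (\<Sum>bs\<in>act_seqs d t. indicator {\<omega>. obs_acts A t \<omega> = bs} \<omega> * Y t bs \<omega>)"
  using obs_acts_in_act_seqs[OF \<omega>] t
  by (simp add: obs_out_def indicator_def sum.delta finite_act_seqs if_distrib[of "\<lambda>x. x * _"] cong: if_cong)

lemma obs_out_integrable: "t \<in> {1..T} \<Longrightarrow> integrable M (obs_out A Y t)"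
proof -
  assume t: "t \<in> {1..T}"
  have "integrable M (\<lambda>\<omega>. \<Sum>bs\<in>act_seqs d t. indicator {\<omega>. obs_acts A t \<omega> = bs} \<omega> * Y t bs \<omega>)"
  proof (intro Bochner_Integration.integrable_sum integrable_bounded_mult[where K=1])
    show "(\<lambda>\<omega>. indicator {\<omega>. obs_acts A t \<omega> = bs} \<omega> :: real) \<in> borel_measurable M" for bs
      using measurable_obs_acts[of t] t unfolding indicator_def by simp measurable
  qed (use Y_int t in auto)
  then show ?thesis
    by (rule Bochner_Integration.integrable_cong[THEN iffD1, rotated -1]) (auto simp: obs_out_eq_sum[OF t])
qed

definition "pseudo_outcome p t \<omega> =
  obs_out A Y t \<omega> + (if t < T then Q (Suc t) p (H (Suc t) \<omega>, p (Suc t) (H (Suc t) \<omega>)) else 0)"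

lemma Q_cexp:
  assumes p: "p \<in> policies" and t: "t \<in> {1..T}"
  shows "cexp_version M (HS t \<Otimes>\<^sub>M count_space UNIV) (\<lambda>\<omega>. (H t \<omega>, A t \<omega>)) (pseudo_outcome p t) (Q t p)"
proof (cases "t < T")
  case True
  then show ?thesis using Q_version p t unfolding policies_def pseudo_outcome_def by auto
next
  case False
  then have "t = T" "pseudo_outcome p t = obs_out A Y T" using t by (auto simp: pseudo_outcome_def)
  then show ?thesis using Q_version p t unfolding policies_def by auto
qed

lemma borel_measurable_Q: "p \<in> policies \<Longrightarrow> t \<in> {1..T} \<Longrightarrow> Q t p \<in> borel_measurable (HS t \<Otimes>\<^sub>M count_space UNIV)"
  using Q_cexp unfolding cexp_version_def by blast

lemma Q_action_integrable: "p \<in> policies \<Longrightarrow> t \<in> {1..T} \<Longrightarrow> integrable M (\<lambda>\<omega>. Q t p (H t \<omega>, A t \<omega>))"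
  using Q_cexp unfolding cexp_version_def by blast

lemma Q_policy_integrable:
  "p \<in> policies \<Longrightarrow> t \<in> {1..T} \<Longrightarrow> c \<in> Pol t \<Longrightarrow> integrable M (\<lambda>\<omega>. Q t p (H t \<omega>, c (H t \<omega>)))"
  by (rule integrable_policy[OF _ _ borel_measurable_Q Q_action_integrable])

lemma pseudo_outcome_integrable: "p \<in> policies \<Longrightarrow> t \<in> {1..T} \<Longrightarrow> integrable M (pseudo_outcome p t)"
  unfolding pseudo_outcome_def[abs_def]
  by (cases "t < T") (auto intro!: obs_out_integrable Q_policy_integrable policies_Pol)

lemma integral_Q_bounded_mult:
  assumes p: "p \<in> policies" and t: "t \<in> {1..T}" and \<psi>: "\<psi> \<in> borel_measurable (HS t \<Otimes>\<^sub>M count_space UNIV)"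
    and \<psi>_bound: "\<And>z. z \<in> space (HS t \<Otimes>\<^sub>M count_space UNIV) \<Longrightarrow> \<bar>\<psi> z\<bar> \<le> K"
  shows "(LINT \<omega>|M. \<psi> (H t \<omega>, A t \<omega>) * pseudo_outcome p t \<omega>) = (LINT \<omega>|M. \<psi> (H t \<omega>, A t \<omega>) * Q t p (H t \<omega>, A t \<omega>))"
  by (rule cexp_version_integral_bounded_mult[OF M measurable_HA[OF t] pseudo_outcome_integrable[OF p t] Q_cexp[OF p t] \<psi> \<psi>_bound])

lemma Q_AE_mono_action:
  assumes p: "p \<in> policies" "p' \<in> policies" and t: "t \<in> {1..T}"
    and le: "AE \<omega> in M. pseudo_outcome p t \<omega> \<le> pseudo_outcome p' t \<omega>"
  shows "AE \<omega> in M. Q t p (H t \<omega>, A t \<omega>) \<le> Q t p' (H t \<omega>, A t \<omega>)"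
  by (rule cexp_version_AE_mono[OF M measurable_HA[OF t] pseudo_outcome_integrable[OF p(1) t]
        pseudo_outcome_integrable[OF p(2) t] Q_cexp[OF p(1) t] Q_cexp[OF p(2) t] le])

lemma Q_AE_mono_policy:
  assumes p: "p \<in> policies" "p' \<in> policies" and t: "t \<in> {1..T}" and c: "c \<in> Pol t"
    and le: "AE \<omega> in M. Q t p (H t \<omega>, A t \<omega>) \<le> Q t p' (H t \<omega>, A t \<omega>)"
  shows "AE \<omega> in M. Q t p (H t \<omega>, c (H t \<omega>)) \<le> Q t p' (H t \<omega>, c (H t \<omega>))"
proof (rule AE_policy_if_AE_action[OF t c _ le])
  show "Measurable.pred (HS t \<Otimes>\<^sub>M count_space UNIV) (\<lambda>z. Q t p z \<le> Q t p' z)"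
    using borel_measurable_Q[OF p(1) t] borel_measurable_Q[OF p(2) t] by measurable
qed

lemma Q_AE_eq_policy:
  assumes p: "p \<in> policies" "p' \<in> policies" and t: "t \<in> {1..T}" and c: "c \<in> Pol t"
    and eq: "AE \<omega> in M. pseudo_outcome p t \<omega> = pseudo_outcome p' t \<omega>"
  shows "AE \<omega> in M. Q t p (H t \<omega>, c (H t \<omega>)) = Q t p' (H t \<omega>, c (H t \<omega>))"
proof -
  have "AE \<omega> in M. pseudo_outcome p t \<omega> \<le> pseudo_outcome p' t \<omega>"
    "AE \<omega> in M. pseudo_outcome p' t \<omega> \<le> pseudo_outcome p t \<omega>"
    using eq by auto
  from this[THEN Q_AE_mono_action[rotated 2, OF t], THEN Q_AE_mono_policy[rotated 2, OF t c]]
  show ?thesis using p by (auto elim: AE_mp)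
qed

lemma integral_policy_Q_eq_ipw:
  assumes p: "p \<in> policies" and t: "t \<in> {1..T}" and c: "c \<in> Pol t"
    and \<phi>: "\<phi> \<in> borel_measurable (HS t)" and \<phi>_bound: "\<And>h. h \<in> space (HS t) \<Longrightarrow> \<bar>\<phi> h\<bar> \<le> K"
  shows "(LINT \<omega>|M. \<phi> (H t \<omega>) * Q t p (H t \<omega>, c (H t \<omega>)))
       = (LINT \<omega>|M. \<phi> (H t \<omega>) * ipw t c (H t \<omega>, A t \<omega>) * pseudo_outcome p t \<omega>)"
proof -
  have [measurable]: "\<phi> \<in> borel_measurable (HS t)" "ipw t c \<in> borel_measurable (HS t \<Otimes>\<^sub>M count_space UNIV)"
    "Q t p \<in> borel_measurable (HS t \<Otimes>\<^sub>M count_space UNIV)"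
    by (fact \<phi> borel_measurable_ipw[OF t c] borel_measurable_Q[OF p t])+
  have "(LINT \<omega>|M. \<phi> (H t \<omega>) * Q t p (H t \<omega>, c (H t \<omega>)))
      = (LINT \<omega>|M. (\<phi> (H t \<omega>) * Q t p (H t \<omega>, A t \<omega>)) * ipw t c (H t \<omega>, A t \<omega>))"
  proof (rule integral_policy_eq_ipw[OF t c, where f="\<lambda>z. \<phi> (fst z) * Q t p z", simplified])
    show "integrable M (\<lambda>\<omega>. \<phi> (H t \<omega>) * Q t p (H t \<omega>, A t \<omega>))"
      using H_space[OF t] \<phi>_bound measurable_compose[OF measurable_H[OF t] \<phi>]
      by (intro integrable_bounded_mult[OF Q_action_integrable[OF p t], where K=K]) (auto simp: comp_def)
  qed measurable
  also have "\<dots> = (LINT \<omega>|M. (\<lambda>z. \<phi> (fst z) * ipw t c z) (H t \<omega>, A t \<omega>) * Q t p (H t \<omega>, A t \<omega>))"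
    by (simp add: ac_simps)
  also have "\<dots> = (LINT \<omega>|M. (\<lambda>z. \<phi> (fst z) * ipw t c z) (H t \<omega>, A t \<omega>) * pseudo_outcome p t \<omega>)"
    by (rule integral_Q_bounded_mult[OF p t borel_measurable_ipw_weighted[OF t c \<phi>] ipw_weighted_bound[where \<phi>=\<phi> and t=t and c=c, OF \<phi>_bound], symmetric])
  finally show ?thesis by simp
qed

definition "follows q t s bs \<omega> =
  (\<Prod>l\<in>{t..s}. if q l (pot_hist S l (take (l - 1) bs) \<omega>) = bs ! (l - 1) then 1 else 0 :: real)"

definition "value_term q t s bs \<omega> =
  Y s bs \<omega> * (if obs_acts A (t - 1) \<omega> = take (t - 1) bs then 1 else 0) * follows q t s bs \<omega>"

definition "value_sum q t \<omega> = (\<Sum>s\<in>{t..T}. \<Sum>bs\<in>act_seqs d s. value_term q t s bs \<omega>)"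

lemma pvalue_eq_integral_value_sum: "pvalue M T d A Y S q t = (LINT \<omega>|M. value_sum q t \<omega>)"
  by (simp add: pvalue_def value_sum_def value_term_def follows_def)

lemma follows_Suc:
  "t \<le> s \<Longrightarrow> follows q t s bs \<omega>
     = (if q t (pot_hist S t (take (t - 1) bs) \<omega>) = bs ! (t - 1) then 1 else 0) * follows q (Suc t) s bs \<omega>"
  by (simp add: follows_def prod.atLeast_Suc_atMost)

lemma borel_measurable_follows:
  assumes "1 \<le> t" "s \<le> T" "q \<in> policies" "bs \<in> act_seqs d s"
  shows "follows q t s bs \<in> borel_measurable M"
  unfolding follows_def[abs_def]
proof (rule borel_measurable_prod)
  fix l assume l: "l \<in> {t..s}"
  have "take (l - 1) bs \<in> act_seqs d (l - 1)" using l assms by (intro take_act_seqs) auto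
  then have [measurable]: "(\<lambda>\<omega>. q l (pot_hist S l (take (l - 1) bs) \<omega>)) \<in> measurable M (count_space UNIV)"
    using l assms by (intro measurable_compose[OF measurable_pot_hist measurable_Pol] policies_Pol) auto
  show "(\<lambda>\<omega>. if q l (pot_hist S l (take (l - 1) bs) \<omega>) = bs ! (l - 1) then 1 else 0 :: real)
      \<in> borel_measurable M" by measurable
qed

lemma borel_measurable_value_term:
  assumes "1 \<le> t" "t \<le> Suc s" "s \<in> {1..T}" "q \<in> policies" "bs \<in> act_seqs d s"
  shows "value_term q t s bs \<in> borel_measurable M"
proof -
  have [measurable]: "obs_acts A (t - 1) \<in> measurable M (count_space UNIV)" "Y s bs \<in> borel_measurable M"
    "follows q t s bs \<in> borel_measurable M"
    using assms by (auto intro: measurable_obs_acts borel_measurable_Y borel_measurable_follows)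
  show ?thesis unfolding value_term_def[abs_def] by measurable
qed

lemma integrable_bounded_mult_value_term:
  assumes "1 \<le> t" "t \<le> Suc s" "s \<in> {1..T}" "q \<in> policies" "bs \<in> act_seqs d s"
    and g: "g \<in> borel_measurable M" "\<And>\<omega>. \<omega> \<in> space M \<Longrightarrow> \<bar>g \<omega>\<bar> \<le> K"
  shows "integrable M (\<lambda>\<omega>. g \<omega> * value_term q t s bs \<omega>)"
proof -
  define I where "I \<omega> = (if obs_acts A (t - 1) \<omega> = take (t - 1) bs then 1 else 0) * follows q t s bs \<omega>" for \<omega>
  have "0 \<le> I \<omega>" "I \<omega> \<le> 1" for \<omega>
    by (simp_all add: I_def follows_def prod_nonneg prod_le_1)
  then have bound: "\<bar>g \<omega> * I \<omega>\<bar> \<le> \<bar>g \<omega>\<bar>" for \<omega>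
    by (metis abs_ge_zero abs_mult abs_of_nonneg mult_left_le)
  have [measurable]: "obs_acts A (t - 1) \<in> measurable M (count_space UNIV)"
    "follows q t s bs \<in> borel_measurable M"
    using assms by (auto intro: measurable_obs_acts borel_measurable_follows)
  have "I \<in> borel_measurable M" unfolding I_def[abs_def] by measurable
  then have gI: "(\<lambda>\<omega>. g \<omega> * I \<omega>) \<in> borel_measurable M" using g(1) by measurable
  have "integrable M (\<lambda>\<omega>. (g \<omega> * I \<omega>) * Y s bs \<omega>)"
    using Y_int assms gI order_trans[OF bound g(2)]
    by (intro integrable_bounded_mult[where K=K]) auto
  then show ?thesis by (simp add: value_term_def I_def ac_simps)
qed

text \<open>Potential outcomes from stage \<open>t\<close> on and potential states from stage \<open>t + 1\<close> on under the
  action sequence \<open>a\<close>: the quantity that sequential ignorability makes independent of \<open>A\<^sub>t\<close> given \<open>H\<^sub>t\<close>.\<close>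

definition "pot_future t a \<omega> = ((\<lambda>s\<in>{t..T}. Y s (take s a) \<omega>), (\<lambda>s\<in>{Suc t..T}. S s (take (s - 1) a) \<omega>))"

definition "pot_future_space t = PiM {t..T} (\<lambda>_. borel :: real measure) \<Otimes>\<^sub>M PiM {Suc t..T} (\<lambda>_. SS)"

lemma measurable_pot_future:
  assumes t: "t \<in> {1..T}" and a: "a \<in> act_seqs d T"
  shows "pot_future t a \<in> measurable M (pot_future_space t)"
  unfolding pot_future_def[abs_def] pot_future_space_def
proof (intro measurable_Pair measurable_restrict)
  fix s assume "s \<in> {t..T}"
  then show "Y s (take s a) \<in> borel_measurable M" using t a by (intro borel_measurable_Y take_act_seqs) auto
next
  fix s assume s: "s \<in> {Suc t..T}"
  then have "take (s - 1) a \<in> act_seqs d (s - 1)" using a by (intro take_act_seqs) auto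
  then show "S s (take (s - 1) a) \<in> measurable M SS" using S_meas s t by auto
qed

lemma integral_action_indicator_pot_future:
  assumes t: "t \<in> {1..T}" and a: "a \<in> act_seqs d T" and f: "f \<in> borel_measurable (HS t \<Otimes>\<^sub>M pot_future_space t)"
  shows "(LINT \<omega>|M. indicator {\<omega>. A t \<omega> = b} \<omega> * f (H t \<omega>, pot_future t a \<omega>))
       = (LINT \<omega>|M. e t (H t \<omega>) b * f (H t \<omega>, pot_future t a \<omega>))"
  using seq_ign t a
  by (intro cond_indep_integral_indicator_eq[OF M measurable_H measurable_pot_future measurable_A _ propensity_cexp f])
     (auto simp: pot_future_def[abs_def] pot_future_space_def)

text \<open>Any extension of \<open>bs\<close> to length \<open>T\<close> would do: only its prefix \<open>bs\<close> is ever read.\<close>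

definition "pad_act_seq bs = bs @ replicate (T - length bs) 0"

lemma pad_act_seq_in: "bs \<in> act_seqs d s \<Longrightarrow> s \<le> T \<Longrightarrow> pad_act_seq bs \<in> act_seqs d T"
  using d_pos by (auto simp: act_seqs_def pad_act_seq_def nth_append)

lemma take_pad_act_seq: "j \<le> length bs \<Longrightarrow> take j (pad_act_seq bs) = take j bs"
  by (simp add: pad_act_seq_def)

text \<open>The history \<open>H\<^sub>l(bs)\<close> at a later stage \<open>l\<close>, assembled from the observed history \<open>h\<close> at stage \<open>t\<close>
  and the potential future states \<open>snd x\<close>.\<close>

definition "hist_ext t bs l h x = (take (l - 1) bs, \<lambda>r\<in>{1..l}. if r \<le> t then snd h r else snd x r)"

lemma measurable_hist_ext:
  assumes t: "t \<in> {1..T}" and l: "l \<in> {Suc t..T}"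
  shows "(\<lambda>z. hist_ext t bs l (fst z) (snd z)) \<in> measurable (HS t \<Otimes>\<^sub>M pot_future_space t) (HS l)"
proof -
  have "(\<lambda>z. if r \<le> t then snd (fst z) r else snd (snd z) r) \<in> measurable (HS t \<Otimes>\<^sub>M pot_future_space t) SS"
    if r: "r \<in> {1..l}" for r
  proof (cases "r \<le> t")
    case True
    have "(\<lambda>z. snd (fst z) r) \<in> measurable (HS t \<Otimes>\<^sub>M pot_future_space t) SS"
      unfolding hist_space_def using r True
      by (intro measurable_component_singleton'[OF measurable_snd measurable_fst]) auto
    then show ?thesis using True by simp
  next
    case False
    have "(\<lambda>z. snd (snd z) r) \<in> measurable (HS t \<Otimes>\<^sub>M pot_future_space t) SS"
      unfolding pot_future_space_def using r l False
      by (intro measurable_component_singleton'[OF measurable_snd measurable_snd]) auto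
    then show ?thesis using False by simp
  qed
  then show ?thesis unfolding hist_ext_def hist_space_def
    by (intro measurable_Pair measurable_restrict) auto
qed

lemma hist_ext_eq:
  assumes bs: "bs \<in> act_seqs d s" and s: "s \<le> T" and l: "l \<in> {Suc t..s}"
    and E: "obs_acts A (t - 1) \<omega> = take (t - 1) bs"
  shows "hist_ext t bs l (H t \<omega>) (pot_future t (pad_act_seq bs) \<omega>) = pot_hist S l (take (l - 1) bs) \<omega>"
proof -
  have len: "length bs = s" using bs by (simp add: act_seqs_def)
  have "(if r \<le> t then snd (H t \<omega>) r else snd (pot_future t (pad_act_seq bs) \<omega>) r)
      = S r (take (r - 1) (take (l - 1) bs)) \<omega>" if r: "r \<in> {1..l}" for r
  proof (cases "r \<le> t")
    case True
    then show ?thesis using r l E by (auto simp: obs_hist_def pot_hist_def min_def)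
  next
    case False
    then show ?thesis using r l s len by (simp add: pot_future_def take_pad_act_seq min_def)
  qed
  then show ?thesis by (auto simp: hist_ext_def pot_hist_def intro!: restrict_ext)
qed

definition "future_term t q bs s z =
  fst (snd z) s * (\<Prod>l\<in>{Suc t..s}. if q l (hist_ext t bs l (fst z) (snd z)) = bs ! (l - 1) then 1 else 0)"

lemma borel_measurable_future_term:
  assumes t: "t \<in> {1..T}" and q: "q \<in> policies" and s: "s \<in> {t..T}"
  shows "future_term t q bs s \<in> borel_measurable (HS t \<Otimes>\<^sub>M pot_future_space t)"
  unfolding future_term_def[abs_def]
proof (intro borel_measurable_times borel_measurable_prod)
  show "(\<lambda>z. fst (snd z) s) \<in> borel_measurable (HS t \<Otimes>\<^sub>M pot_future_space t)"
    unfolding pot_future_space_def using s by (intro measurable_component_singleton'[OF measurable_fst measurable_snd]) auto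
next
  fix l assume l: "l \<in> {Suc t..s}"
  then have [measurable]: "(\<lambda>z. q l (hist_ext t bs l (fst z) (snd z))) \<in> measurable (HS t \<Otimes>\<^sub>M pot_future_space t) (count_space UNIV)"
    using s by (intro measurable_compose[OF measurable_hist_ext[OF t] measurable_Pol] policies_Pol[OF q]) auto
  show "(\<lambda>z. if q l (hist_ext t bs l (fst z) (snd z)) = bs ! (l - 1) then 1 else 0 :: real)
      \<in> borel_measurable (HS t \<Otimes>\<^sub>M pot_future_space t)" by measurable
qed

lemma future_term_eq:
  assumes bs: "bs \<in> act_seqs d s" and s: "s \<in> {t..T}" and E: "obs_acts A (t - 1) \<omega> = take (t - 1) bs"
  shows "future_term t q bs s (H t \<omega>, pot_future t (pad_act_seq bs) \<omega>) = Y s bs \<omega> * follows q (Suc t) s bs \<omega>"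
proof -
  have "take s (pad_act_seq bs) = bs" using bs by (simp add: act_seqs_def take_pad_act_seq)
  moreover have "(\<Prod>l\<in>{Suc t..s}. if q l (hist_ext t bs l (H t \<omega>) (pot_future t (pad_act_seq bs) \<omega>)) = bs ! (l - 1)
      then 1 else 0) = follows q (Suc t) s bs \<omega>"
    unfolding follows_def using s by (intro prod.cong refl) (simp add: hist_ext_eq[OF bs _ _ E])
  ultimately show ?thesis using s by (simp add: future_term_def pot_future_def)
qed

lemma value_term_split:
  assumes bs: "bs \<in> act_seqs d s" and t: "t \<in> {1..s}" and E: "obs_acts A (t - 1) \<omega> = take (t - 1) bs"
  shows "value_term q t s bs \<omega> = Y s bs \<omega> * (if q t (H t \<omega>) = bs ! (t - 1) then 1 else 0) * follows q (Suc t) s bs \<omega>"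
    and "value_term q (Suc t) s bs \<omega> = Y s bs \<omega> * (if A t \<omega> = bs ! (t - 1) then 1 else 0) * follows q (Suc t) s bs \<omega>"
proof -
  have "length bs = s" using bs by (simp add: act_seqs_def)
  then show "value_term q (Suc t) s bs \<omega> = Y s bs \<omega> * (if A t \<omega> = bs ! (t - 1) then 1 else 0) * follows q (Suc t) s bs \<omega>"
    using obs_acts_eq_take_iff[of t bs A \<omega>] t E by (simp add: value_term_def)
  show "value_term q t s bs \<omega> = Y s bs \<omega> * (if q t (H t \<omega>) = bs ! (t - 1) then 1 else 0) * follows q (Suc t) s bs \<omega>"
    using follows_Suc[of t s q bs \<omega>] t E by (simp add: value_term_def obs_hist_def)
qed

lemma value_term_eq_0:
  assumes bs: "bs \<in> act_seqs d s" and t: "t \<in> {1..s}" and E: "obs_acts A (t - 1) \<omega> \<noteq> take (t - 1) bs"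
  shows "value_term q t s bs \<omega> = 0" "value_term q (Suc t) s bs \<omega> = 0"
  using obs_acts_eq_take_iff[of t bs A \<omega>] bs t E by (auto simp: value_term_def act_seqs_def)

definition "shifted_term \<phi> q t s bs z = \<phi> (fst z) * ipw t (q t) (fst z, bs ! (t - 1))
  * (if fst (fst z) = take (t - 1) bs then 1 else 0) * future_term t q bs s z"

lemma borel_measurable_shifted_term:
  assumes t: "t \<in> {1..T}" and q: "q \<in> policies" and s: "s \<in> {t..T}" and \<phi>: "\<phi> \<in> borel_measurable (HS t)"
  shows "shifted_term \<phi> q t s bs \<in> borel_measurable (HS t \<Otimes>\<^sub>M pot_future_space t)"
proof -
  have [measurable]: "\<phi> \<in> borel_measurable (HS t)" "ipw t (q t) \<in> borel_measurable (HS t \<Otimes>\<^sub>M count_space UNIV)"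
    "future_term t q bs s \<in> borel_measurable (HS t \<Otimes>\<^sub>M pot_future_space t)"
    "(\<lambda>z. fst (fst z)) \<in> measurable (HS t \<Otimes>\<^sub>M pot_future_space t) (count_space UNIV)"
    using \<phi> borel_measurable_ipw[OF t policies_Pol[OF q t]] borel_measurable_future_term[OF t q s] by (auto simp: hist_space_def)
  show ?thesis unfolding shifted_term_def[abs_def] by measurable
qed

lemma propensity_mult_shifted_term:
  assumes t: "t \<in> {1..T}" and q: "q \<in> policies" and s: "s \<in> {t..T}" and bs: "bs \<in> act_seqs d s"
  shows "AE \<omega> in M. \<phi> (H t \<omega>) * value_term q t s bs \<omega>
    = e t (H t \<omega>) (bs ! (t - 1)) * shifted_term \<phi> q t s bs (H t \<omega>, pot_future t (pad_act_seq bs) \<omega>)"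
  using overlap_AE[OF t policies_Pol[OF q t]]
proof eventually_elim
  case (elim \<omega>)
  have ts: "t \<in> {1..s}" using t s by simp
  show ?case
  proof (cases "obs_acts A (t - 1) \<omega> = take (t - 1) bs")
    case True
    then show ?thesis
      using propensity_mult_ipw[of t "H t \<omega>" "q t" "bs ! (t - 1)", OF elim]
        value_term_split(1)[OF bs ts True] future_term_eq[OF bs s True]
      by (simp add: shifted_term_def fst_obs_hist)
  qed (simp add: shifted_term_def fst_obs_hist value_term_eq_0[OF bs ts])
qed

lemma indicator_mult_shifted_term:
  assumes t: "t \<in> {1..T}" and s: "s \<in> {t..T}" and bs: "bs \<in> act_seqs d s"
  shows "indicator {\<omega>. A t \<omega> = bs ! (t - 1)} \<omega> * shifted_term \<phi> q t s bs (H t \<omega>, pot_future t (pad_act_seq bs) \<omega>)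
    = \<phi> (H t \<omega>) * ipw t (q t) (H t \<omega>, A t \<omega>) * value_term q (Suc t) s bs \<omega>"
proof -
  have ts: "t \<in> {1..s}" using t s by simp
  show ?thesis
  proof (cases "obs_acts A (t - 1) \<omega> = take (t - 1) bs")
    case True
    then show ?thesis using value_term_split(2)[OF bs ts True] future_term_eq[OF bs s True]
      by (simp add: shifted_term_def fst_obs_hist indicator_def)
  qed (simp add: shifted_term_def fst_obs_hist value_term_eq_0[OF bs ts])
qed

text \<open>On the event that the first \<open>t - 1\<close> actions follow \<open>bs\<close>, the integrand is a function of \<open>H\<^sub>t\<close> and
  the potential future under \<open>bs\<close>, so sequential ignorability lets the propensity of \<open>bs\<^sub>t\<close> be traded
  for the indicator of \<open>A\<^sub>t = bs\<^sub>t\<close>.\<close>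

lemma integral_value_term_shift:
  assumes t: "t \<in> {1..T}" and q: "q \<in> policies" and s: "s \<in> {t..T}" and bs: "bs \<in> act_seqs d s"
    and \<phi>: "\<phi> \<in> borel_measurable (HS t)"
  shows "(LINT \<omega>|M. \<phi> (H t \<omega>) * value_term q t s bs \<omega>)
       = (LINT \<omega>|M. \<phi> (H t \<omega>) * ipw t (q t) (H t \<omega>, A t \<omega>) * value_term q (Suc t) s bs \<omega>)"
proof -
  let ?f = "shifted_term \<phi> q t s bs" and ?a = "pad_act_seq bs" and ?v = "bs ! (t - 1)"
  have a: "?a \<in> act_seqs d T" using pad_act_seq_in[OF bs] s by simp
  note fm = borel_measurable_shifted_term[OF t q s \<phi>]
  have "(LINT \<omega>|M. \<phi> (H t \<omega>) * value_term q t s bs \<omega>)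
      = (LINT \<omega>|M. e t (H t \<omega>) ?v * ?f (H t \<omega>, pot_future t ?a \<omega>))"
  proof (rule integral_cong_AE[OF _ _ propensity_mult_shifted_term[OF t q s bs]])
    show "(\<lambda>\<omega>. \<phi> (H t \<omega>) * value_term q t s bs \<omega>) \<in> borel_measurable M"
      using measurable_compose[OF measurable_H[OF t] \<phi>] borel_measurable_value_term[of t s q bs] t s q bs
      by (intro borel_measurable_times) (auto simp: comp_def)
    show "(\<lambda>\<omega>. e t (H t \<omega>) ?v * ?f (H t \<omega>, pot_future t ?a \<omega>)) \<in> borel_measurable M"
      using measurable_compose[OF measurable_H[OF t] borel_measurable_propensity[OF t]]
        measurable_compose[OF measurable_Pair[OF measurable_H[OF t] measurable_pot_future[OF t a]] fm]
      by (intro borel_measurable_times) (auto simp: comp_def)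
  qed
  also have "\<dots> = (LINT \<omega>|M. indicator {\<omega>. A t \<omega> = ?v} \<omega> * ?f (H t \<omega>, pot_future t ?a \<omega>))"
    by (rule integral_action_indicator_pot_future[OF t a fm, symmetric])
  finally show ?thesis by (simp only: indicator_mult_shifted_term[OF t s bs])
qed

lemma integrable_bounded_mult_value_sum:
  assumes t: "1 \<le> t" and q: "q \<in> policies"
    and g: "g \<in> borel_measurable M" "\<And>\<omega>. \<omega> \<in> space M \<Longrightarrow> \<bar>g \<omega>\<bar> \<le> K"
  shows "integrable M (\<lambda>\<omega>. g \<omega> * value_sum q t \<omega>)"
  unfolding value_sum_def sum_distrib_left
  using t q g by (intro Bochner_Integration.integrable_sum integrable_bounded_mult_value_term) auto

lemma integral_bounded_mult_sum_value_term:
  assumes t: "1 \<le> r" "1 \<le> t" "t \<le> Suc r" and q: "q \<in> policies"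
    and g: "g \<in> borel_measurable M" "\<And>\<omega>. \<omega> \<in> space M \<Longrightarrow> \<bar>g \<omega>\<bar> \<le> K"
  shows "(LINT \<omega>|M. g \<omega> * (\<Sum>s\<in>{r..T}. \<Sum>bs\<in>act_seqs d s. value_term q t s bs \<omega>))
       = (\<Sum>s\<in>{r..T}. \<Sum>bs\<in>act_seqs d s. LINT \<omega>|M. g \<omega> * value_term q t s bs \<omega>)"
proof -
  have int: "integrable M (\<lambda>\<omega>. g \<omega> * value_term q t s bs \<omega>)" if "s \<in> {r..T}" "bs \<in> act_seqs d s" for s bs
    using that t q g by (intro integrable_bounded_mult_value_term) auto
  have "(LINT \<omega>|M. (\<Sum>s\<in>{r..T}. \<Sum>bs\<in>act_seqs d s. g \<omega> * value_term q t s bs \<omega>))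
      = (\<Sum>s\<in>{r..T}. LINT \<omega>|M. (\<Sum>bs\<in>act_seqs d s. g \<omega> * value_term q t s bs \<omega>))"
    by (rule Bochner_Integration.integral_sum) (auto intro!: Bochner_Integration.integrable_sum int)
  also have "\<dots> = (\<Sum>s\<in>{r..T}. \<Sum>bs\<in>act_seqs d s. LINT \<omega>|M. g \<omega> * value_term q t s bs \<omega>)"
    by (intro sum.cong refl Bochner_Integration.integral_sum int)
  finally show ?thesis by (simp only: sum_distrib_left)
qed

lemma value_sum_Suc:
  assumes t: "t \<in> {1..T}" and \<omega>: "\<omega> \<in> space M"
  shows "(\<Sum>s\<in>{t..T}. \<Sum>bs\<in>act_seqs d s. value_term q (Suc t) s bs \<omega>) = obs_out A Y t \<omega> + value_sum q (Suc t) \<omega>"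
proof -
  have "(\<Sum>bs\<in>act_seqs d t. value_term q (Suc t) t bs \<omega>)
      = (\<Sum>bs\<in>act_seqs d t. indicator {\<omega>. obs_acts A t \<omega> = bs} \<omega> * Y t bs \<omega>)"
    by (intro sum.cong refl) (auto simp: value_term_def follows_def act_seqs_def indicator_def)
  also have "\<dots> = obs_out A Y t \<omega>" by (rule obs_out_eq_sum[OF t \<omega>, symmetric])
  moreover have "{t..T} = insert t {Suc t..T}" using t by auto
  ultimately show ?thesis by (simp add: value_sum_def)
qed

lemma integral_value_sum_shift:
  assumes t: "t \<in> {1..T}" and q: "q \<in> policies"
    and \<phi>: "\<phi> \<in> borel_measurable (HS t)" and \<phi>_bound: "\<And>h. h \<in> space (HS t) \<Longrightarrow> \<bar>\<phi> h\<bar> \<le> K"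
  shows "(LINT \<omega>|M. \<phi> (H t \<omega>) * value_sum q t \<omega>)
       = (LINT \<omega>|M. \<phi> (H t \<omega>) * ipw t (q t) (H t \<omega>, A t \<omega>) * (obs_out A Y t \<omega> + value_sum q (Suc t) \<omega>))"
proof -
  let ?w = "\<lambda>\<omega>. \<phi> (H t \<omega>) * ipw t (q t) (H t \<omega>, A t \<omega>)"
  have \<phi>H: "(\<lambda>\<omega>. \<phi> (H t \<omega>)) \<in> borel_measurable M" "\<And>\<omega>. \<omega> \<in> space M \<Longrightarrow> \<bar>\<phi> (H t \<omega>)\<bar> \<le> K"
    using measurable_compose[OF measurable_H[OF t] \<phi>] \<phi>_bound H_space[OF t] by (auto simp: comp_def)
  note w = ipw_weighted_action[OF t policies_Pol[OF q t] \<phi> \<phi>_bound]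
  have "(LINT \<omega>|M. \<phi> (H t \<omega>) * value_sum q t \<omega>)
      = (\<Sum>s\<in>{t..T}. \<Sum>bs\<in>act_seqs d s. LINT \<omega>|M. \<phi> (H t \<omega>) * value_term q t s bs \<omega>)"
    unfolding value_sum_def using t by (intro integral_bounded_mult_sum_value_term[OF _ _ _ q \<phi>H]) auto
  also have "\<dots> = (\<Sum>s\<in>{t..T}. \<Sum>bs\<in>act_seqs d s. LINT \<omega>|M. ?w \<omega> * value_term q (Suc t) s bs \<omega>)"
    by (intro sum.cong refl integral_value_term_shift[OF t q _ _ \<phi>])
  also have "\<dots> = (LINT \<omega>|M. ?w \<omega> * (\<Sum>s\<in>{t..T}. \<Sum>bs\<in>act_seqs d s. value_term q (Suc t) s bs \<omega>))"
    using t by (intro integral_bounded_mult_sum_value_term[OF _ _ _ q w, symmetric]) auto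
  also have "\<dots> = (LINT \<omega>|M. ?w \<omega> * (obs_out A Y t \<omega> + value_sum q (Suc t) \<omega>))"
    by (intro Bochner_Integration.integral_cong refl) (simp add: value_sum_Suc[OF t])
  finally show ?thesis .
qed

definition "hist_split t h = ((take (t - 1) (fst h), restrict (snd h) {1..t}), fst h ! (t - 1))"

lemma measurable_hist_split: "hist_split t \<in> measurable (HS (Suc t)) (HS t \<Otimes>\<^sub>M count_space UNIV)"
  unfolding hist_split_def[abs_def] hist_space_def
  by (intro measurable_Pair measurable_compose[OF measurable_fst measurable_count_space]
      measurable_compose[OF measurable_snd measurable_restrict_subset]) auto

lemma hist_split_obs_hist: "t \<in> {1..T} \<Longrightarrow> hist_split t (H (Suc t) \<omega>) = (H t \<omega>, A t \<omega>)"
  by (auto simp: hist_split_def obs_hist_def pot_hist_def take_obs_acts nth_obs_acts fun_eq_iff)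

lemma integral_value_sum_eq_Q:
  assumes q: "q \<in> policies" and t: "1 \<le> t" "t \<le> T"
    and \<phi>: "\<phi> \<in> borel_measurable (HS t)" and \<phi>_bound: "\<And>h. h \<in> space (HS t) \<Longrightarrow> \<bar>\<phi> h\<bar> \<le> K"
  shows "(LINT \<omega>|M. \<phi> (H t \<omega>) * value_sum q t \<omega>) = (LINT \<omega>|M. \<phi> (H t \<omega>) * Q t q (H t \<omega>, q t (H t \<omega>)))"
  using t(2,1) \<phi> \<phi>_bound
proof (induction t arbitrary: \<phi> K rule: inc_induct)
  case base
  have "value_sum q (Suc T) = (\<lambda>_. 0)" "pseudo_outcome q T = obs_out A Y T"
    by (simp_all add: value_sum_def pseudo_outcome_def fun_eq_iff)
  then show ?case
    using integral_value_sum_shift[OF _ q base(2,3)] integral_policy_Q_eq_ipw[OF q _ _ base(2,3)] base(1)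
    by (simp add: policies_Pol[OF q])
next
  case (step n)
  then have n: "n \<in> {1..T}" "Suc n \<in> {1..T}" by auto
  let ?w = "\<lambda>z. \<phi> (fst z) * ipw n (q n) z"
  let ?Q' = "\<lambda>\<omega>. Q (Suc n) q (H (Suc n) \<omega>, q (Suc n) (H (Suc n) \<omega>))"
  note wHA = ipw_weighted_action[OF n(1) policies_Pol[OF q n(1)] step.prems(2,3)]
  have split: "?w (H n \<omega>, A n \<omega>) = (\<lambda>h. ?w (hist_split n h)) (H (Suc n) \<omega>)" for \<omega>
    by (simp add: hist_split_obs_hist[OF n(1)])
  have "(LINT \<omega>|M. ?w (H n \<omega>, A n \<omega>) * value_sum q (Suc n) \<omega>) = (LINT \<omega>|M. ?w (H n \<omega>, A n \<omega>) * ?Q' \<omega>)"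
    unfolding split
  proof (rule step.IH)
    show "(\<lambda>h. ?w (hist_split n h)) \<in> borel_measurable (HS (Suc n))"
      using measurable_compose[OF measurable_hist_split borel_measurable_ipw_weighted[OF n(1) policies_Pol[OF q n(1)] step.prems(2)]]
      by (simp add: comp_def)
    show "\<bar>?w (hist_split n h)\<bar> \<le> K / \<eta>" if "h \<in> space (HS (Suc n))" for h
      using step.prems(3) measurable_space[OF measurable_hist_split that] by (intro ipw_weighted_bound)
  qed (use n in auto)
  moreover have "integrable M (\<lambda>\<omega>. ?w (H n \<omega>, A n \<omega>) * obs_out A Y n \<omega>)"
    "integrable M (\<lambda>\<omega>. ?w (H n \<omega>, A n \<omega>) * value_sum q (Suc n) \<omega>)"
    "integrable M (\<lambda>\<omega>. ?w (H n \<omega>, A n \<omega>) * ?Q' \<omega>)"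
    using integrable_bounded_mult[OF obs_out_integrable[OF n(1)] wHA]
      integrable_bounded_mult_value_sum[OF _ q wHA]
      integrable_bounded_mult[OF Q_policy_integrable[OF q n(2) policies_Pol[OF q n(2)]] wHA]
    by auto
  ultimately have "(LINT \<omega>|M. ?w (H n \<omega>, A n \<omega>) * (obs_out A Y n \<omega> + value_sum q (Suc n) \<omega>))
      = (LINT \<omega>|M. ?w (H n \<omega>, A n \<omega>) * pseudo_outcome q n \<omega>)"
    using step.hyps by (simp add: pseudo_outcome_def distrib_left)
  then show ?case
    using integral_value_sum_shift[OF n(1) q step.prems(2,3)]
      integral_policy_Q_eq_ipw[OF q n(1) _ step.prems(2,3)]
    by (simp add: policies_Pol[OF q n(1)] mult.assoc)
qed

lemma pvalue_eq_integral_Q: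
  "q \<in> policies \<Longrightarrow> t \<in> {1..T} \<Longrightarrow> pvalue M T d A Y S q t = (LINT \<omega>|M. Q t q (H t \<omega>, q t (H t \<omega>)))"
  using integral_value_sum_eq_Q[of q t "\<lambda>_. 1" 1] by (simp add: pvalue_eq_integral_value_sum)

section \<open>Optimality of backward induction\<close>

lemma Q_AE_eq_if_future_eq:
  assumes p: "p \<in> policies" "p' \<in> policies" and t: "1 \<le> t" "t \<le> T"
    and eq: "\<And>l. l \<in> {Suc t..T} \<Longrightarrow> p l = p' l" and c: "c \<in> Pol t"
  shows "AE \<omega> in M. Q t p (H t \<omega>, c (H t \<omega>)) = Q t p' (H t \<omega>, c (H t \<omega>))"
  using t(2,1) eq c
proof (induction t arbitrary: c rule: inc_induct)
  case base
  then show ?case by (intro Q_AE_eq_policy[OF p]) (auto simp: pseudo_outcome_def)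
next
  case (step n)
  then have n: "n \<in> {1..T}" "Suc n \<in> {1..T}" and eq: "p (Suc n) = p' (Suc n)" by auto
  have "AE \<omega> in M. Q (Suc n) p (H (Suc n) \<omega>, p (Suc n) (H (Suc n) \<omega>))
      = Q (Suc n) p' (H (Suc n) \<omega>, p (Suc n) (H (Suc n) \<omega>))"
    using step.prems(2) n(2) by (intro step.IH policies_Pol[OF p(1)]) auto
  then have "AE \<omega> in M. pseudo_outcome p n \<omega> = pseudo_outcome p' n \<omega>"
    by eventually_elim (use step.hyps in \<open>simp add: pseudo_outcome_def eq\<close>)
  then show ?case by (rule Q_AE_eq_policy[OF p n(1) step.prems(3)])
qed

text \<open>The predicate is satisfiable by correct specification.\<close>

definition "piS = (SOME p. p \<in> policies \<and> (\<forall>t\<in>{2..T}. AE \<omega> in M. \<forall>c\<in>Pol t.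
    Q t p (H t \<omega>, c (H t \<omega>)) \<le> Q t p (H t \<omega>, p t (H t \<omega>))))"

lemma piS_policies: "piS \<in> policies"
  and piS_greedy: "t \<in> {2..T} \<Longrightarrow> c \<in> Pol t \<Longrightarrow>
    AE \<omega> in M. Q t piS (H t \<omega>, c (H t \<omega>)) \<le> Q t piS (H t \<omega>, piS t (H t \<omega>))"
proof -
  have "\<exists>p. p \<in> policies \<and> (\<forall>t\<in>{2..T}. AE \<omega> in M. \<forall>c\<in>Pol t.
      Q t p (H t \<omega>, c (H t \<omega>)) \<le> Q t p (H t \<omega>, p t (H t \<omega>)))"
    using correct_spec by (simp add: policies_def)
  from someI_ex[OF this]
  have spec: "piS \<in> policies \<and> (\<forall>t\<in>{2..T}. AE \<omega> in M. \<forall>c\<in>Pol t.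
      Q t piS (H t \<omega>, c (H t \<omega>)) \<le> Q t piS (H t \<omega>, piS t (H t \<omega>)))"
    unfolding piS_def .
  then show "piS \<in> policies" by simp
  show "AE \<omega> in M. Q t piS (H t \<omega>, c (H t \<omega>)) \<le> Q t piS (H t \<omega>, piS t (H t \<omega>))"
    if "t \<in> {2..T}" "c \<in> Pol t"
    using bspec[OF conjunct2[OF spec] that(1)] by eventually_elim (use that(2) in blast)
qed

lemma Q_policy_le_piS_if_action_le:
  assumes t: "t \<in> {2..T}" and q: "q \<in> policies"
    and le: "AE \<omega> in M. Q t q (H t \<omega>, A t \<omega>) \<le> Q t piS (H t \<omega>, A t \<omega>)"
  shows "AE \<omega> in M. Q t q (H t \<omega>, q t (H t \<omega>)) \<le> Q t piS (H t \<omega>, piS t (H t \<omega>))"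
proof -
  have t1: "t \<in> {1..T}" using t by simp
  note c = policies_Pol[OF q t1]
  from Q_AE_mono_policy[OF q piS_policies t1 c le] piS_greedy[OF t c] show ?thesis
    by eventually_elim simp
qed

lemma Q_action_le_piS:
  assumes q: "q \<in> policies" and t: "1 \<le> t" "t \<le> T"
  shows "AE \<omega> in M. Q t q (H t \<omega>, A t \<omega>) \<le> Q t piS (H t \<omega>, A t \<omega>)"
  using t(2,1)
proof (induction t rule: inc_induct)
  case base
  then show ?case by (intro Q_AE_mono_action[OF q piS_policies]) (auto simp: pseudo_outcome_def)
next
  case (step n)
  have "AE \<omega> in M. Q (Suc n) q (H (Suc n) \<omega>, q (Suc n) (H (Suc n) \<omega>))
      \<le> Q (Suc n) piS (H (Suc n) \<omega>, piS (Suc n) (H (Suc n) \<omega>))"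
    using step by (intro Q_policy_le_piS_if_action_le[OF _ q]) auto
  then have "AE \<omega> in M. pseudo_outcome q n \<omega> \<le> pseudo_outcome piS n \<omega>"
    by eventually_elim (use step.hyps in \<open>simp add: pseudo_outcome_def\<close>)
  then show ?case using step by (intro Q_AE_mono_action[OF q piS_policies]) auto
qed

lemma piB_policies: "piB \<in> policies"
  using backward by (simp add: policies_def)

text \<open>\<open>piB t\<close> maximises the integral of \<open>Q t piB (H t \<omega>, \<cdot>)\<close>, while \<open>piS t\<close> maximises
  \<open>Q t piS (H t \<omega>, \<cdot>)\<close> pointwise; once the two Q-functions agree, the maxima coincide almost surely.\<close>

lemma Q_greedy_piB_eq_piS:
  assumes t: "t \<in> {2..T}"
    and eq: "\<And>c. c \<in> Pol t \<Longrightarrow> AE \<omega> in M. Q t piB (H t \<omega>, c (H t \<omega>)) = Q t piS (H t \<omega>, c (H t \<omega>))"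
  shows "AE \<omega> in M. Q t piB (H t \<omega>, piB t (H t \<omega>)) = Q t piS (H t \<omega>, piS t (H t \<omega>))"
proof -
  have t1: "t \<in> {1..T}" using t by simp
  have cB: "piB t \<in> Pol t" and cS: "piS t \<in> Pol t"
    using policies_Pol[OF piB_policies t1] policies_Pol[OF piS_policies t1] .
  have int: "integrable M (\<lambda>\<omega>. Q t p (H t \<omega>, c (H t \<omega>)))" if "p \<in> {piB, piS}" "c \<in> Pol t" for p c
    using that piB_policies piS_policies by (auto intro: Q_policy_integrable[OF _ t1])
  have integral_eq: "(LINT \<omega>|M. Q t piB (H t \<omega>, c (H t \<omega>))) = (LINT \<omega>|M. Q t piS (H t \<omega>, c (H t \<omega>)))"
    if c: "c \<in> Pol t" for c
    using eq[OF c] int[OF _ c] by (intro integral_cong_AE) (auto dest: borel_measurable_integrable)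
  have "(LINT \<omega>|M. Q t piS (H t \<omega>, piS t (H t \<omega>))) \<le> (LINT \<omega>|M. Q t piS (H t \<omega>, piB t (H t \<omega>)))"
    using backward t1 cS by (simp add: integral_eq[symmetric] cB cS)
  then have "AE \<omega> in M. Q t piS (H t \<omega>, piB t (H t \<omega>)) = Q t piS (H t \<omega>, piS t (H t \<omega>))"
    using piS_greedy[OF t cB] by (intro AE_eq_if_AE_le_integral_ge int) (auto simp: cB cS)
  with eq[OF cB] show ?thesis by eventually_elim simp
qed

lemma Q_piB_eq_piS:
  assumes t: "1 \<le> t" "t \<le> T" and c: "c \<in> Pol t"
  shows "AE \<omega> in M. Q t piB (H t \<omega>, c (H t \<omega>)) = Q t piS (H t \<omega>, c (H t \<omega>))"
  using t(2,1) c
proof (induction t arbitrary: c rule: inc_induct)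
  case base
  then show ?case by (intro Q_AE_eq_policy[OF piB_policies piS_policies]) (auto simp: pseudo_outcome_def)
next
  case (step n)
  have "AE \<omega> in M. Q (Suc n) piB (H (Suc n) \<omega>, piB (Suc n) (H (Suc n) \<omega>))
      = Q (Suc n) piS (H (Suc n) \<omega>, piS (Suc n) (H (Suc n) \<omega>))"
    using step by (intro Q_greedy_piB_eq_piS step.IH) auto
  then have "AE \<omega> in M. pseudo_outcome piB n \<omega> = pseudo_outcome piS n \<omega>"
    by eventually_elim (use step.hyps in \<open>simp add: pseudo_outcome_def\<close>)
  then show ?case using step by (intro Q_AE_eq_policy[OF piB_policies piS_policies]) auto
qed

lemma Q_policy_le_piB:
  assumes t: "t \<in> {2..T}" and q: "q \<in> policies"
  shows "AE \<omega> in M. Q t q (H t \<omega>, q t (H t \<omega>)) \<le> Q t piB (H t \<omega>, piB t (H t \<omega>))"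
proof -
  have "AE \<omega> in M. Q t piB (H t \<omega>, piB t (H t \<omega>)) = Q t piS (H t \<omega>, piS t (H t \<omega>))"
    using t by (intro Q_greedy_piB_eq_piS Q_piB_eq_piS) auto
  moreover have "AE \<omega> in M. Q t q (H t \<omega>, q t (H t \<omega>)) \<le> Q t piS (H t \<omega>, piS t (H t \<omega>))"
    using t by (intro Q_policy_le_piS_if_action_le[OF t q] Q_action_le_piS[OF q]) auto
  ultimately show ?thesis by eventually_elim simp
qed

lemma Q_le_Q_piB:
  assumes t: "t \<in> {1..T}" and q: "q \<in> policies" and c: "c \<in> Pol t"
  shows "AE \<omega> in M. Q t q (H t \<omega>, c (H t \<omega>)) \<le> Q t piB (H t \<omega>, c (H t \<omega>))"
proof (rule Q_AE_mono_policy[OF q piB_policies t c Q_AE_mono_action[OF q piB_policies t]])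
  show "AE \<omega> in M. pseudo_outcome q t \<omega> \<le> pseudo_outcome piB t \<omega>"
  proof (cases "t < T")
    case True
    with Q_policy_le_piB[OF _ q, of "Suc t"] t show ?thesis
      by (auto simp: pseudo_outcome_def elim!: AE_mp)
  qed (simp add: pseudo_outcome_def)
qed

section \<open>The regret bound\<close>

lemma welfare_eq_pvalue: "welfare M T d Y S p = pvalue M T d A Y S p 1"
  by (simp add: welfare_def pvalue_def obs_acts_def)

lemma welfare_le_piB:
  assumes p: "p \<in> policies"
  shows "welfare M T d Y S p \<le> welfare M T d Y S piB"
proof -
  have one: "1 \<in> {1..T}" using T by simp
  note c = policies_Pol[OF p one]
  have "welfare M T d Y S p = (LINT \<omega>|M. Q 1 p (H 1 \<omega>, p 1 (H 1 \<omega>)))"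
    unfolding welfare_eq_pvalue by (rule pvalue_eq_integral_Q[OF p one])
  also have "\<dots> \<le> (LINT \<omega>|M. Q 1 piB (H 1 \<omega>, p 1 (H 1 \<omega>)))"
    by (rule integral_mono_AE[OF Q_policy_integrable[OF p one c] Q_policy_integrable[OF piB_policies one c]
          Q_le_Q_piB[OF one p c]])
  also have "\<dots> \<le> (LINT \<omega>|M. Q 1 piB (H 1 \<omega>, piB 1 (H 1 \<omega>)))"
    using backward one c by blast
  also have "\<dots> = welfare M T d Y S piB"
    unfolding welfare_eq_pvalue by (rule pvalue_eq_integral_Q[OF piB_policies one, symmetric])
  finally show ?thesis .
qed

definition "value_gap t =
  (LINT \<omega>|M. Q t piB (H t \<omega>, piB t (H t \<omega>))) - (LINT \<omega>|M. Q t pol (H t \<omega>, pol t (H t \<omega>)))"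

lemma pol_policies: "pol \<in> policies"
  using pol by (simp add: policies_def)

lemma regret_le_value_gap: "regret M T d Y S Pol pol \<le> value_gap 1"
proof -
  have one: "1 \<in> {1..T}" using T by simp
  have "(SUP p\<in>{p. \<forall>t\<in>{1..T}. p t \<in> Pol t}. welfare M T d Y S p) \<le> welfare M T d Y S piB"
    using pol welfare_le_piB by (intro cSUP_least) (auto simp: policies_def)
  moreover have "welfare M T d Y S piB - welfare M T d Y S pol = value_gap 1"
    by (simp only: value_gap_def welfare_eq_pvalue pvalue_eq_integral_Q[OF piB_policies one]
        pvalue_eq_integral_Q[OF pol_policies one])
  ultimately show ?thesis by (simp add: regret_def)
qed

lemma value_gap_nonneg: "t \<in> {2..T} \<Longrightarrow> 0 \<le> value_gap t"
  unfolding value_gap_def diff_ge_0_iff_ge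
  by (intro integral_mono_AE Q_policy_integrable Q_policy_le_piB pol_policies piB_policies policies_Pol) auto

lemma stage_regret_eq_Q:
  assumes t: "t \<in> {1..T}"
  shows "stage_regret M T d A Y S pol t (piB t)
       = (LINT \<omega>|M. Q t pol (H t \<omega>, piB t (H t \<omega>))) - (LINT \<omega>|M. Q t pol (H t \<omega>, pol t (H t \<omega>)))"
proof -
  have cB: "piB t \<in> Pol t" by (rule policies_Pol[OF piB_policies t])
  have p': "pol(t := piB t) \<in> policies" using pol_policies cB by (auto simp: policies_def)
  have "(LINT \<omega>|M. Q t (pol(t := piB t)) (H t \<omega>, piB t (H t \<omega>))) = (LINT \<omega>|M. Q t pol (H t \<omega>, piB t (H t \<omega>)))"
    using Q_AE_eq_if_future_eq[OF p' pol_policies _ _ _ cB] t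
      Q_policy_integrable[OF p' t cB] Q_policy_integrable[OF pol_policies t cB]
    by (intro integral_cong_AE) (auto dest: borel_measurable_integrable)
  then show ?thesis using t
    by (simp add: stage_regret_def pvalue_eq_integral_Q[OF p' t] pvalue_eq_integral_Q[OF pol_policies t])
qed

text \<open>Importance weighting moves the Q-difference one stage ahead, where it is nonnegative
  almost surely, so the weight \<open>ipw \<le> 1 / \<eta>\<close> can be pulled out.\<close>

lemma integral_Q_piB_diff_le:
  assumes t: "t \<in> {1..<T}" and c: "c \<in> Pol t"
  shows "(LINT \<omega>|M. Q t piB (H t \<omega>, c (H t \<omega>))) - (LINT \<omega>|M. Q t pol (H t \<omega>, c (H t \<omega>))) \<le> value_gap (Suc t) / \<eta>"
proof -
  have t': "t \<in> {1..T}" "Suc t \<in> {2..T}" using t by auto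
  define \<Delta> where "\<Delta> \<omega> = Q (Suc t) piB (H (Suc t) \<omega>, piB (Suc t) (H (Suc t) \<omega>))
    - Q (Suc t) pol (H (Suc t) \<omega>, pol (Suc t) (H (Suc t) \<omega>))" for \<omega>
  let ?w = "\<lambda>\<omega>. ipw t c (H t \<omega>, A t \<omega>)"
  have w: "?w \<in> borel_measurable M" "\<And>\<omega>. \<bar>?w \<omega>\<bar> \<le> 1 / \<eta>"
    using measurable_compose[OF measurable_HA[OF t'(1)] borel_measurable_ipw[OF t'(1) c]] ipw_le ipw_nonneg
    by (auto simp: comp_def)
  have int: "integrable M (\<lambda>\<omega>. ?w \<omega> * pseudo_outcome p t \<omega>)" if "p \<in> policies" for p
    using integrable_bounded_mult[OF pseudo_outcome_integrable[OF that t'(1)] w(1)] w(2) by blast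
  have \<Delta>: "integrable M \<Delta>" "AE \<omega> in M. 0 \<le> \<Delta> \<omega>"
    using Q_policy_le_piB[OF t'(2) pol_policies] t' unfolding \<Delta>_def
    by (auto intro!: Bochner_Integration.integrable_diff Q_policy_integrable piB_policies pol_policies
        policies_Pol elim: AE_mp)
  have "(LINT \<omega>|M. Q t piB (H t \<omega>, c (H t \<omega>))) - (LINT \<omega>|M. Q t pol (H t \<omega>, c (H t \<omega>)))
      = (LINT \<omega>|M. ?w \<omega> * pseudo_outcome piB t \<omega> - ?w \<omega> * pseudo_outcome pol t \<omega>)"
    using integral_policy_Q_eq_ipw[OF _ t'(1) c, of _ "\<lambda>_. 1" 1] int piB_policies pol_policies by simp
  also have "\<dots> = (LINT \<omega>|M. ?w \<omega> * \<Delta> \<omega>)"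
    using t by (intro Bochner_Integration.integral_cong) (auto simp: pseudo_outcome_def \<Delta>_def algebra_simps)
  also have "\<dots> \<le> (LINT \<omega>|M. \<Delta> \<omega> / \<eta>)"
  proof (rule integral_mono_AE)
    show "integrable M (\<lambda>\<omega>. ?w \<omega> * \<Delta> \<omega>)" using integrable_bounded_mult[OF \<Delta>(1) w] by blast
    show "AE \<omega> in M. ?w \<omega> * \<Delta> \<omega> \<le> \<Delta> \<omega> / \<eta>"
      using \<Delta>(2) by eventually_elim (use mult_right_mono[OF ipw_le] in simp)
  qed (use \<Delta>(1) in simp)
  also have "\<dots> = value_gap (Suc t) / \<eta>"
    using \<Delta>(1) t' by (simp add: \<Delta>_def value_gap_def Q_policy_integrable piB_policies pol_policies policies_Pol)
  finally show ?thesis .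
qed

lemma value_gap_step:
  assumes t: "t \<in> {1..T}"
  shows "value_gap t \<le> stage_regret M T d A Y S pol t (piB t) + (if t < T then value_gap (Suc t) / \<eta> else 0)"
proof -
  have cB: "piB t \<in> Pol t" by (rule policies_Pol[OF piB_policies t])
  have "value_gap t - stage_regret M T d A Y S pol t (piB t)
      = (LINT \<omega>|M. Q t piB (H t \<omega>, piB t (H t \<omega>))) - (LINT \<omega>|M. Q t pol (H t \<omega>, piB t (H t \<omega>)))"
    by (simp add: value_gap_def stage_regret_eq_Q[OF t])
  also have "\<dots> \<le> (if t < T then value_gap (Suc t) / \<eta> else 0)"
  proof (cases "t < T")
    case True
    then show ?thesis using integral_Q_piB_diff_le[OF _ cB] t by simp
  next
    case False
    then have "AE \<omega> in M. Q t piB (H t \<omega>, piB t (H t \<omega>)) = Q t pol (H t \<omega>, piB t (H t \<omega>))"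
      using t by (intro Q_AE_eq_if_future_eq[OF piB_policies pol_policies _ _ _ cB]) auto
    then have "(LINT \<omega>|M. Q t piB (H t \<omega>, piB t (H t \<omega>))) = (LINT \<omega>|M. Q t pol (H t \<omega>, piB t (H t \<omega>)))"
      using Q_policy_integrable[OF piB_policies t cB] Q_policy_integrable[OF pol_policies t cB]
      by (intro integral_cong_AE) (auto dest: borel_measurable_integrable)
    then show ?thesis using False by simp
  qed
  finally show ?thesis by simp
qed

end

text \<open>The weights \<open>w\<close> absorb the factor \<open>1 / \<eta>\<close> in front of \<open>D (Suc t)\<close>; this needs \<open>D\<close> to be
  nonnegative beyond the first stage, whereas \<open>R\<close> may have any sign.\<close>

lemma weighted_recursion_bound:
  fixes D R w :: "nat \<Rightarrow> real"
  assumes "k \<le> T"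
    and w_nonneg: "\<And>t. k \<le> t \<Longrightarrow> t \<le> T \<Longrightarrow> 0 \<le> w t"
    and w_step: "\<And>t. k \<le> t \<Longrightarrow> t < T \<Longrightarrow> w t / \<eta> \<le> w (Suc t)"
    and D_nonneg: "\<And>t. k < t \<Longrightarrow> t \<le> T \<Longrightarrow> 0 \<le> D t"
    and D_step: "\<And>t. k \<le> t \<Longrightarrow> t \<le> T \<Longrightarrow> D t \<le> R t + (if t < T then D (Suc t) / \<eta> else 0)"
  shows "w k * D k \<le> (\<Sum>t\<in>{k..T}. w t * R t)"
  using assms(1)
proof (induction k rule: inc_induct)
  case base
  then show ?case using D_step[of T] w_nonneg[of T] assms(1) by (simp add: mult_left_mono)
next
  case (step n)
  have "w n * D n \<le> w n * (R n + D (Suc n) / \<eta>)"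
    using D_step[of n] w_nonneg[of n] step.hyps assms(1) by (simp add: mult_left_mono)
  also have "\<dots> = w n * R n + (w n / \<eta>) * D (Suc n)" by (simp add: algebra_simps)
  also have "\<dots> \<le> w n * R n + w (Suc n) * D (Suc n)"
    by (intro add_left_mono mult_right_mono w_step D_nonneg) (use step.hyps in auto)
  also have "\<dots> \<le> w n * R n + (\<Sum>t\<in>{Suc n..T}. w t * R t)" using step.IH by simp
  also have "\<dots> = (\<Sum>t\<in>{n..T}. w t * R t)"
    using step.hyps by (simp add: sum.atLeast_Suc_atMost)
  finally show ?case .
qed

context dynamic_treatment_regime
begin

lemma regret_bound:
  "regret M T d Y S Pol pol
     \<le> stage_regret M T d A Y S pol 1 (piB 1)
       + (\<Sum>t\<in>{2..T}. (2 ^ (t - 2) / \<eta> ^ (t - 1)) * stage_regret M T d A Y S pol t (piB t))"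
proof -
  define w where "w t = (if t = 1 then 1 else 2 ^ (t - 2) / \<eta> ^ (t - 1) :: real)" for t
  have w_step: "w t / \<eta> \<le> w (Suc t)" if "1 \<le> t" for t
  proof (cases "t = 1")
    case False
    define k where "k = t - 2"
    have k: "t = Suc (Suc k)" using that False by (simp add: k_def)
    have "w t / \<eta> = 2 ^ k / \<eta> ^ Suc (Suc k)" "w (Suc t) = 2 * 2 ^ k / \<eta> ^ Suc (Suc k)"
      by (simp_all add: w_def k)
    then show ?thesis using eta by (simp add: divide_right_mono)
  qed (simp add: w_def)
  have "w 1 * value_gap 1 \<le> (\<Sum>t\<in>{1..T}. w t * stage_regret M T d A Y S pol t (piB t))"
  proof (rule weighted_recursion_bound)
    show "0 \<le> w t" for t using eta(1) by (simp add: w_def)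
    show "value_gap t \<le> stage_regret M T d A Y S pol t (piB t) + (if t < T then value_gap (Suc t) / \<eta> else 0)"
      if "1 \<le> t" "t \<le> T" for t
      using that by (intro value_gap_step) simp
  qed (use T w_step value_gap_nonneg in auto)
  also have "\<dots> = stage_regret M T d A Y S pol 1 (piB 1)
       + (\<Sum>t\<in>{2..T}. (2 ^ (t - 2) / \<eta> ^ (t - 1)) * stage_regret M T d A Y S pol t (piB t))"
  proof -
    have "{1..T} = insert 1 {2..T}" using T by auto
    moreover have "(\<Sum>t\<in>{2..T}. w t * stage_regret M T d A Y S pol t (piB t))
        = (\<Sum>t\<in>{2..T}. (2 ^ (t - 2) / \<eta> ^ (t - 1)) * stage_regret M T d A Y S pol t (piB t))"
      by (intro sum.cong) (auto simp: w_def)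
    ultimately show ?thesis by (simp add: w_def)
  qed
  finally show ?thesis using regret_le_value_gap by (simp add: w_def)
qed

end

theorem lemma9:
  fixes M :: "'a measure" and SS :: "'S measure" and T :: nat and d :: "nat \<Rightarrow> nat"
    and A :: "nat \<Rightarrow> 'a \<Rightarrow> nat"
    and S :: "nat \<Rightarrow> nat list \<Rightarrow> 'a \<Rightarrow> 'S"
    and Y :: "nat \<Rightarrow> nat list \<Rightarrow> 'a \<Rightarrow> real"
    and Pol :: "nat \<Rightarrow> ('S hist \<Rightarrow> nat) set"
    and e :: "nat \<Rightarrow> 'S hist \<Rightarrow> nat \<Rightarrow> real"
    and Q :: "nat \<Rightarrow> (nat \<Rightarrow> 'S hist \<Rightarrow> nat) \<Rightarrow> 'S hist \<times> nat \<Rightarrow> real"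
    and \<eta> :: real
    and pol piB :: "nat \<Rightarrow> 'S hist \<Rightarrow> nat"
  assumes M: "prob_space M"
    and T: "1 \<le> T"
    and A_meas: "\<forall>t\<in>{1..T}. A t \<in> measurable M (count_space UNIV) \<and> (\<forall>\<omega>\<in>space M. A t \<omega> < d t)"
    and S_meas: "\<forall>t\<in>{1..T}. \<forall>bs\<in>act_seqs d (t - 1). S t bs \<in> measurable M SS"
    and Y_int: "\<forall>t\<in>{1..T}. \<forall>bs\<in>act_seqs d t. integrable M (Y t bs)"
    and Pi_policies: "\<forall>t\<in>{1..T}. \<forall>p\<in>Pol t. p \<in> measurable (hist_space SS t) (count_space UNIV)
                        \<and> (\<forall>h\<in>space (hist_space SS t). p h < d t)"
    and seq_ign: "\<forall>t\<in>{1..T}. \<forall>a\<in>act_seqs d T.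
        cond_indep M (PiM {t..T} (\<lambda>_. borel) \<Otimes>\<^sub>M PiM {Suc t..T} (\<lambda>_. SS))
          (\<lambda>\<omega>. ((\<lambda>s\<in>{t..T}. Y s (take s a) \<omega>), (\<lambda>s\<in>{Suc t..T}. S s (take (s - 1) a) \<omega>)))
          (count_space UNIV) (A t) (hist_space SS t) (obs_hist A S t)"
    and e_version: "\<forall>t\<in>{1..T}. \<forall>a. cexp_version M (hist_space SS t) (obs_hist A S t)
                        (\<lambda>\<omega>. indicator {\<omega>. A t \<omega> = a} \<omega>) (\<lambda>h. e t h a)"
    and eta: "0 < \<eta>" "\<eta> < 1"
    and overlap: "\<forall>t\<in>{1..T}. \<forall>p\<in>Pol t. AE \<omega> in M. \<eta> \<le> e t (obs_hist A S t \<omega>) (p (obs_hist A S t \<omega>))"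
    and Q_version: "\<forall>p. (\<forall>t\<in>{1..T}. p t \<in> Pol t) \<longrightarrow>
        cexp_version M (hist_space SS T \<Otimes>\<^sub>M count_space UNIV) (\<lambda>\<omega>. (obs_hist A S T \<omega>, A T \<omega>))
          (obs_out A Y T) (Q T p) \<and>
        (\<forall>t\<in>{1..<T}. cexp_version M (hist_space SS t \<Otimes>\<^sub>M count_space UNIV) (\<lambda>\<omega>. (obs_hist A S t \<omega>, A t \<omega>))
          (\<lambda>\<omega>. obs_out A Y t \<omega> + Q (Suc t) p (obs_hist A S (Suc t) \<omega>, p (Suc t) (obs_hist A S (Suc t) \<omega>)))
          (Q t p))"
    and backward: "\<forall>t\<in>{1..T}. piB t \<in> Pol t \<and>
        (\<forall>p\<in>Pol t. (LINT \<omega>|M. Q t piB (obs_hist A S t \<omega>, p (obs_hist A S t \<omega>)))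
                 \<le> (LINT \<omega>|M. Q t piB (obs_hist A S t \<omega>, piB t (obs_hist A S t \<omega>))))"
    and correct_spec: "\<exists>piS. (\<forall>t\<in>{1..T}. piS t \<in> Pol t) \<and>
        (\<forall>t\<in>{2..T}. AE \<omega> in M. \<forall>p\<in>Pol t.
            Q t piS (obs_hist A S t \<omega>, p (obs_hist A S t \<omega>))
              \<le> Q t piS (obs_hist A S t \<omega>, piS t (obs_hist A S t \<omega>)))"
    and pol: "\<forall>t\<in>{1..T}. pol t \<in> Pol t"
  shows "regret M T d Y S Pol pol
           \<le> stage_regret M T d A Y S pol 1 (piB 1)
             + (\<Sum>t\<in>{2..T}. (2 ^ (t - 2) / \<eta> ^ (t - 1)) * stage_regret M T d A Y S pol t (piB t))"
proof -
  interpret dynamic_treatment_regime M SS T d A S Y Pol e Q \<eta> pol piB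
    by (rule dynamic_treatment_regime.intro[OF assms])
  show ?thesis by (rule regret_bound)
qed

end
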